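(* Let Assumption 2 hold. For $M>0$ define $W^{(M)}_{ij}=\mathbf 1_{|W_{ij}|\le M}W_{ij}-\mathbb E[\mathbf 1_{|W_{ij}|\le M}W_{ij}]$, $X^{(n,M)}_{ij}=\sqrt{s^{(n)}_{ij}}W^{(M)}_{ij}$, and for $k\in[n]$ \[ P_k^{(n)}=\sum_{I\subset[n],|I|=k}\det X^{(n)}_I,\qquad P_k^{(n,M)}=\sum_{I\subset[n],|I|=k}\det X^{(n,M)}_I . \] Then for each fixed integer $k>0$ there exist numbers $\varepsilon_M$ with $\varepsilon_M\to0$ as $M\to\infty$ such that $\sup_n\mathbb E|P_k^{(n)}-P_k^{(n,M)}|^2\le\varepsilon_M$ (the supremum over $n\ge k$).
   Context: Setting: $(W_{ij})$ i.i.d. complex, $\mathbb EW_{11}=0$, $\mathbb E|W_{11}|^2=1$; $S^{(n)}=[s^{(n)}_{ij}]$ deterministic non-negative $n\times n$; $X^{(n)}_{ij}=\sqrt{s^{(n)}_{ij}}W_{ij}$. For $I\subset[n]$, $M_I$ denotes the principal submatrix with rows and columns in $I$. Assumption 2: for each $\varepsilon\in(0,1]$, $\liminf_n\min_{\gamma\in[0,1-\varepsilon]}\det(I_n-\gamma S^{(n)})>0$. *)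

theory Defs
  imports "HOL-Probability.Probability" "HOL-Combinatorics.Permutations"
begin

text \<open>Determinant of the principal submatrix of A with rows and columns in the finite
  index set I (independent of any ordering of I).\<close>
definition detI :: "nat set \<Rightarrow> (nat \<Rightarrow> nat \<Rightarrow> 'a::comm_ring_1) \<Rightarrow> 'a" where
  "detI I A = (\<Sum>p\<in>{p. p permutes I}. of_int (sign p) * (\<Prod>i\<in>I. A i (p i)))"

text \<open>Assumption 2, for the n x n matrices S n (entries S n i j, i,j < n; index set [n] = {0..<n}).\<close>
definition assumption2 :: "(nat \<Rightarrow> nat \<Rightarrow> nat \<Rightarrow> real) \<Rightarrow> bool" where
  "assumption2 S \<longleftrightarrow> (\<forall>\<epsilon>::real. 0 < \<epsilon> \<and> \<epsilon> \<le> 1 \<longrightarrow>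
     liminf (\<lambda>n. ereal (Inf ((\<lambda>\<gamma>. detI {..<n} (\<lambda>i j. (if i = j then 1 else 0) - \<gamma> * S n i j))
                               ` {0..1-\<epsilon>}))) > 0)"

definition trunc_centered :: "'s measure \<Rightarrow> real \<Rightarrow> ('s \<Rightarrow> complex) \<Rightarrow> 's \<Rightarrow> complex" where
  "trunc_centered Pr m V \<omega> =
     (if cmod (V \<omega>) \<le> m then V \<omega> else 0)
     - integral\<^sup>L Pr (\<lambda>\<omega>'. if cmod (V \<omega>') \<le> m then V \<omega>' else 0)"

definition Pk :: "nat \<Rightarrow> nat \<Rightarrow> (nat \<Rightarrow> nat \<Rightarrow> complex) \<Rightarrow> complex" where
  "Pk n k X = (\<Sum>I\<in>{I. I \<subseteq> {..<n} \<and> card I = k}. detI I X)"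

end

(*
  Write P_k as a sum over pairs (I, p) of a k-subset I of [n] and a permutation p of I. The term of
  (I, p) in P_k - P_k^(M) is a product over the graph {(i, p i). i \<in> I} of original minus truncated
  entries; graphs of different pairs differ, the entries are independent and centred, so these terms
  are orthogonal and E|P_k - P_k^(M)|^2 = Q_n(k) D_k(M). Here D_k(M) depends only on the law of
  W_11 and tends to 0 by dominated convergence, and Q_n(k) = \<Sum>_{(I,p)} \<Prod>_{i \<in> I} s_{i,p(i)} is the
  sum of the permanents of the k x k principal minors of S^(n).

  To bound Q_n(k) uniformly in n, split off the cycle of p through min I:
  Q_n(k) \<le> \<Sum>_{l=1..k} tr(S^l) Q_n(k - l). For the traces, d/dv (- ln det(1 - vS)) = tr((1 - vS)^-1 S),
  and the resolvent (1 - vS)^-1 is entrywise nonnegative and increasing in v as long as det(1 - vS)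
  stays positive, hence dominates v^j S^j. With det(1 - vS) \<ge> c > 0 on [0, \<gamma>] this gives
  (\<gamma>/2)^j tr(S^(j+1)) \<le> (2/\<gamma>)(- ln c), and Assumption 2 supplies such c for \<gamma> = 1/2 and all large n.
*)

theory Submission
  imports Defs "Jordan_Normal_Form.Determinant" "HOL-Combinatorics.Orbits"
begin

section \<open>The resolvent of the pencil 1 - v S\<close>

definition kernel_mat :: "nat \<Rightarrow> (nat \<Rightarrow> nat \<Rightarrow> real) \<Rightarrow> real mat" where
  "kernel_mat n s = mat n n (\<lambda>(i, j). s i j)"

definition pencil :: "nat \<Rightarrow> (nat \<Rightarrow> nat \<Rightarrow> real) \<Rightarrow> real \<Rightarrow> real mat" where
  "pencil n s v = 1\<^sub>m n - v \<cdot>\<^sub>m kernel_mat n s"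

definition pencil_det :: "nat \<Rightarrow> (nat \<Rightarrow> nat \<Rightarrow> real) \<Rightarrow> real \<Rightarrow> real" where
  "pencil_det n s v = det (pencil n s v)"

definition resolvent :: "nat \<Rightarrow> (nat \<Rightarrow> nat \<Rightarrow> real) \<Rightarrow> real \<Rightarrow> real mat" where
  "resolvent n s v = (1 / pencil_det n s v) \<cdot>\<^sub>m adj_mat (pencil n s v)"

definition mat_trace :: "'a::comm_ring_1 mat \<Rightarrow> 'a" where
  "mat_trace A = (\<Sum>i<dim_row A. A $$ (i, i))"

definition nonneg_mat :: "nat \<Rightarrow> real mat \<Rightarrow> bool" where
  "nonneg_mat n A \<longleftrightarrow> (\<forall>i<n. \<forall>j<n. 0 \<le> A $$ (i, j))"

lemma dim_kernel_mat [simp]: "dim_row (kernel_mat n s) = n" "dim_col (kernel_mat n s) = n"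
  by (simp_all add: kernel_mat_def)

lemma dim_pencil [simp]: "dim_row (pencil n s v) = n" "dim_col (pencil n s v) = n"
  by (simp_all add: pencil_def)

lemma kernel_mat_carrier [simp]: "kernel_mat n s \<in> carrier_mat n n"
  by (simp add: kernel_mat_def)

lemma pencil_carrier [simp]: "pencil n s v \<in> carrier_mat n n"
  by (rule carrier_matI) simp_all

lemma resolvent_carrier [simp]: "resolvent n s v \<in> carrier_mat n n"
  by (simp add: resolvent_def adj_mat(1)[OF pencil_carrier])

lemma dim_resolvent [simp]: "dim_row (resolvent n s v) = n" "dim_col (resolvent n s v) = n"
  using resolvent_carrier by (blast dest: carrier_matD)+

lemma index_kernel_mat [simp]: "i < n \<Longrightarrow> j < n \<Longrightarrow> kernel_mat n s $$ (i, j) = s i j"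
  by (simp add: kernel_mat_def)

lemma index_pencil [simp]:
  "i < n \<Longrightarrow> j < n \<Longrightarrow> pencil n s v $$ (i, j) = (if i = j then 1 else 0) - v * s i j"
  by (simp add: pencil_def)

lemma index_mult_mat_sum [simp]:
  "i < dim_row A \<Longrightarrow> j < dim_col B \<Longrightarrow> dim_col A = dim_row B \<Longrightarrow>
   (A * B) $$ (i, j) = (\<Sum>l<dim_row B. A $$ (i, l) * B $$ (l, j))"
  by (simp add: scalar_prod_def atLeast0LessThan)

declare index_mult_mat(1) [simp del]

lemma pencil_zero: "pencil n s 0 = 1\<^sub>m n"
  by (rule eq_matI) (auto simp: pencil_def)

lemma pencil_det_zero: "pencil_det n s 0 = 1"
  by (simp add: pencil_det_def pencil_zero)

lemma resolvent_inverse: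
  assumes "pencil_det n s v \<noteq> 0"
  shows "pencil n s v * resolvent n s v = 1\<^sub>m n" "resolvent n s v * pencil n s v = 1\<^sub>m n"
proof -
  have A: "pencil n s v \<in> carrier_mat n n" by simp
  have adj: "adj_mat (pencil n s v) \<in> carrier_mat n n" by (rule adj_mat(1)[OF A])
  have cancel: "(1 / pencil_det n s v) \<cdot>\<^sub>m (det (pencil n s v) \<cdot>\<^sub>m 1\<^sub>m n) = 1\<^sub>m n"
    using assms by (intro eq_matI) (auto simp: pencil_det_def)
  show "pencil n s v * resolvent n s v = 1\<^sub>m n"
    unfolding resolvent_def mult_smult_distrib[OF A adj] adj_mat(2)[OF A] by (rule cancel)
  show "resolvent n s v * pencil n s v = 1\<^sub>m n"
    unfolding resolvent_def mult_smult_assoc_mat[OF adj A] adj_mat(3)[OF A] by (rule cancel)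
qed

lemma resolvent_zero: "resolvent n s 0 = 1\<^sub>m n"
  using resolvent_inverse(1)[of n s 0] by (simp add: pencil_det_zero pencil_zero)

lemma resolvent_eq:
  assumes "pencil_det n s v \<noteq> 0" "i < n" "j < n"
  shows "resolvent n s v $$ (i, j)
    = (if i = j then 1 else 0) + v * (\<Sum>l<n. s i l * resolvent n s v $$ (l, j))"
proof -
  let ?N = "resolvent n s v"
  have "(if i = j then 1 else 0) = (pencil n s v * ?N) $$ (i, j)"
    using resolvent_inverse(1)[OF assms(1)] assms(2,3) by simp
  also have "\<dots> = (\<Sum>l<n. ((if i = l then 1 else 0) - v * s i l) * ?N $$ (l, j))"
    using assms(2,3) by simp
  also have "\<dots> = (\<Sum>l<n. (if i = l then 1 else 0) * ?N $$ (l, j)) - v * (\<Sum>l<n. s i l * ?N $$ (l, j))"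
    by (simp add: left_diff_distrib sum_subtractf sum_distrib_left mult.assoc)
  also have "(\<Sum>l<n. (if i = l then 1 else 0) * ?N $$ (l, j)) = (\<Sum>l<n. if i = l then ?N $$ (l, j) else 0)"
    by (intro sum.cong) auto
  also have "\<dots> = ?N $$ (i, j)"
    using assms(2) by simp
  finally show ?thesis by simp
qed

lemma pencil_factor:
  assumes "pencil_det n s v \<noteq> 0"
  shows "pencil n s x = pencil n s v * (1\<^sub>m n - (x - v) \<cdot>\<^sub>m (resolvent n s v * kernel_mat n s))"
proof -
  have "pencil n s v * (1\<^sub>m n - (x - v) \<cdot>\<^sub>m (resolvent n s v * kernel_mat n s))
      = pencil n s v - (x - v) \<cdot>\<^sub>m ((pencil n s v * resolvent n s v) * kernel_mat n s)"
    by (subst mult_minus_distrib_mat[of _ n n], auto simp: minus_carrier_mat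
        mult_smult_distrib[OF pencil_carrier mult_carrier_mat[OF resolvent_carrier kernel_mat_carrier]]
        assoc_mult_mat[OF pencil_carrier resolvent_carrier kernel_mat_carrier])
  also have "\<dots> = pencil n s x"
    using resolvent_inverse[OF assms]
    by (intro eq_matI) (auto simp: pencil_def left_diff_distrib right_diff_distrib)
  finally show ?thesis by simp
qed

lemma resolvent_identity:
  assumes "pencil_det n s v \<noteq> 0" "pencil_det n s w \<noteq> 0"
  shows "resolvent n s w = resolvent n s v + (w - v) \<cdot>\<^sub>m (resolvent n s w * kernel_mat n s * resolvent n s v)"
proof -
  let ?S = "kernel_mat n s" and ?Nv = "resolvent n s v" and ?Nw = "resolvent n s w"
  have "pencil n s v = pencil n s w + (w - v) \<cdot>\<^sub>m ?S"
    by (intro eq_matI) (auto simp: pencil_def left_diff_distrib right_diff_distrib)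
  then have "?Nw * pencil n s v * ?Nv = ?Nw * (pencil n s w + (w - v) \<cdot>\<^sub>m ?S) * ?Nv"
    by simp
  also have "\<dots> = (?Nw * pencil n s w) * ?Nv + (w - v) \<cdot>\<^sub>m (?Nw * ?S * ?Nv)"
    by (subst mult_add_distrib_mat[of _ n n],
        auto simp: add_mult_distrib_mat[OF mult_carrier_mat[OF resolvent_carrier pencil_carrier]
          smult_carrier_mat[OF mult_carrier_mat[OF resolvent_carrier kernel_mat_carrier]] resolvent_carrier]
        mult_smult_distrib[OF resolvent_carrier kernel_mat_carrier]
        mult_smult_assoc_mat[OF mult_carrier_mat[OF resolvent_carrier kernel_mat_carrier] resolvent_carrier])
  also have "\<dots> = ?Nv + (w - v) \<cdot>\<^sub>m (?Nw * ?S * ?Nv)"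
    using resolvent_inverse[OF assms(2)] by simp
  finally show ?thesis
    using resolvent_inverse[OF assms(1)] by (simp add: assoc_mult_mat[OF resolvent_carrier pencil_carrier resolvent_carrier])
qed

text \<open>Only the identity permutation contributes to the linear term of \<open>det (1 - h B)\<close>.\<close>

lemma has_real_derivative_det_one_minus:
  assumes B: "B \<in> carrier_mat n n"
  shows "((\<lambda>h. det (1\<^sub>m n - h \<cdot>\<^sub>m B)) has_real_derivative (- mat_trace B)) (at 0)"
proof -
  define f where "f p i h = (if i = p i then 1 else 0) - h * B $$ (i, p i)" for p :: "nat \<Rightarrow> nat" and i h
  define P where "P = {p. p permutes {0..<n}}"
  define D where "D p = (\<Sum>i\<in>{0..<n}. (- B $$ (i, p i)) * (\<Prod>j\<in>{0..<n}-{i}. f p j 0))" for p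
  have det_eq: "det (1\<^sub>m n - h \<cdot>\<^sub>m B) = (\<Sum>p\<in>P. of_int (sign p) * (\<Prod>i\<in>{0..<n}. f p i h))" for h
  proof -
    have carrier: "1\<^sub>m n - h \<cdot>\<^sub>m B \<in> carrier_mat n n" using B by (simp add: minus_carrier_mat)
    show ?thesis
      unfolding det_def'[OF carrier] P_def
      by (intro sum.cong refl arg_cong2[where f="(*)"] prod.cong)
         (use B in \<open>auto simp: f_def dest: permutes_in_image\<close>)
  qed
  have deriv: "((\<lambda>h. \<Sum>p\<in>P. of_int (sign p) * (\<Prod>i\<in>{0..<n}. f p i h)) has_real_derivative
      (\<Sum>p\<in>P. of_int (sign p) * D p)) (at 0)"
    unfolding D_def
    by (intro DERIV_sum DERIV_cmult has_field_derivative_prod) (auto simp: f_def intro!: derivative_eq_intros)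
  have "D p = 0" if p: "p \<in> P" "p \<noteq> id" for p
    unfolding D_def
  proof (intro sum.neutral ballI)
    fix i assume "i \<in> {0..<n}"
    from p(2) obtain j0 where j0: "p j0 \<noteq> j0" by (auto simp: fun_eq_iff)
    have pp: "p permutes {0..<n}" using p(1) by (simp add: P_def)
    have j0n: "j0 \<in> {0..<n}" using j0 pp by (meson permutes_not_in)
    have j1n: "p j0 \<in> {0..<n}" using j0n pp by (simp add: permutes_in_image)
    have j1: "p (p j0) \<noteq> p j0" using j0 pp by (metis permutes_inj injD)
    have "\<exists>j\<in>{0..<n}-{i}. f p j 0 = 0"
    proof (cases "i = j0")
      case True
      then show ?thesis using j0 j1 j1n by (intro bexI[of _ "p j0"]) (auto simp: f_def)
    next
      case False
      then show ?thesis using j0 j0n by (intro bexI[of _ j0]) (auto simp: f_def)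
    qed
    then show "(- B $$ (i, p i)) * (\<Prod>j\<in>{0..<n}-{i}. f p j 0) = 0"
      by (simp add: prod_zero)
  qed
  then have "(\<Sum>p\<in>P. of_int (sign p) * D p) = (\<Sum>p\<in>{id}. of_int (sign p) * D p)"
    by (intro sum.mono_neutral_right) (auto simp: P_def permutes_id finite_permutations)
  also have "\<dots> = - mat_trace B"
    using B by (simp add: D_def f_def sign_id mat_trace_def sum_negf atLeast0LessThan)
  finally show ?thesis
    using deriv by (simp add: det_eq)
qed

lemma pencil_det_has_derivative:
  assumes "pencil_det n s v \<noteq> 0"
  shows "(pencil_det n s has_real_derivative
           (- pencil_det n s v * mat_trace (resolvent n s v * kernel_mat n s))) (at v)"
proof -
  let ?B = "resolvent n s v * kernel_mat n s"
  have B: "?B \<in> carrier_mat n n" by (rule mult_carrier_mat[OF resolvent_carrier kernel_mat_carrier])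
  have factor: "pencil_det n s = (\<lambda>x. pencil_det n s v * det (1\<^sub>m n - (x - v) \<cdot>\<^sub>m ?B))"
  proof
    fix x
    show "pencil_det n s x = pencil_det n s v * det (1\<^sub>m n - (x - v) \<cdot>\<^sub>m ?B)"
      unfolding pencil_det_def
      by (subst pencil_factor[OF assms, of x], rule det_mult[of _ n], auto simp: minus_carrier_mat)
  qed
  have "((\<lambda>x. det (1\<^sub>m n - (x - v) \<cdot>\<^sub>m ?B)) has_real_derivative (- mat_trace ?B) * 1) (at v)"
    using has_real_derivative_det_one_minus[OF B]
    by (intro DERIV_chain2[where f="\<lambda>h. det (1\<^sub>m n - h \<cdot>\<^sub>m ?B)" and g="\<lambda>x. x - v"])
       (auto intro!: derivative_eq_intros)
  then show ?thesis
    by (subst factor) (auto intro: DERIV_cmult[THEN DERIV_cong])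
qed

section \<open>Nonnegativity of the resolvent and traces of powers\<close>

lemma abs_det_le:
  fixes B :: "real mat"
  assumes B: "B \<in> carrier_mat m m" and b: "\<And>i j. i < m \<Longrightarrow> j < m \<Longrightarrow> \<bar>B $$ (i, j)\<bar> \<le> b"
  shows "\<bar>det B\<bar> \<le> fact m * b ^ m"
proof -
  have "\<bar>det B\<bar> \<le> (\<Sum>p\<in>{p. p permutes {0..<m}}. \<bar>of_int (sign p) * (\<Prod>i=0..<m. B $$ (i, p i))\<bar>)"
    unfolding det_def'[OF B] by (rule sum_abs)
  also have "\<dots> \<le> (\<Sum>p\<in>{p. p permutes {0..<m}}. b ^ m)"
  proof (rule sum_mono)
    fix p assume p: "p \<in> {p. p permutes {0..<m}}"
    have "\<bar>of_int (sign p) * (\<Prod>i=0..<m. B $$ (i, p i))\<bar> = (\<Prod>i=0..<m. \<bar>B $$ (i, p i)\<bar>)"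
      by (simp add: abs_mult sign_def abs_prod)
    also have "\<dots> \<le> (\<Prod>i=0..<m. b)"
      by (rule prod_mono) (use p b in \<open>auto dest: permutes_in_image\<close>)
    finally show "\<bar>of_int (sign p) * (\<Prod>i=0..<m. B $$ (i, p i))\<bar> \<le> b ^ m" by simp
  qed
  also have "\<dots> = fact m * b ^ m" by (simp add: card_permutations[of "{0..<m}" m])
  finally show ?thesis .
qed

text \<open>Cramer's rule: an entry of the resolvent is a minor of the pencil divided by its determinant.\<close>

lemma abs_resolvent_le:
  assumes s: "\<And>i j. i < n \<Longrightarrow> j < n \<Longrightarrow> \<bar>s i j\<bar> \<le> smax" and v: "0 \<le> v" "v \<le> \<gamma>"
    and c: "c \<le> pencil_det n s v" "0 < c" and i: "i < n" and j: "j < n"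
  shows "\<bar>resolvent n s v $$ (i, j)\<bar> \<le> fact (n - 1) * (1 + \<gamma> * smax) ^ (n - 1) / c"
proof -
  let ?minor = "mat_delete (pencil n s v) j i"
  have entry: "\<bar>?minor $$ (a, b)\<bar> \<le> 1 + \<gamma> * smax" if "a < n - 1" "b < n - 1" for a b
  proof -
    define a' where "a' = (if a < j then a else Suc a)"
    define b' where "b' = (if b < i then b else Suc b)"
    have ab: "a' < n" "b' < n" using that by (auto simp: a'_def b'_def)
    have "?minor $$ (a, b) = (if a' = b' then 1 else 0) - v * s a' b'"
      using that ab by (simp add: mat_delete_def a'_def b'_def)
    moreover have "\<bar>v * s a' b'\<bar> \<le> \<gamma> * smax"
      using s[OF ab] v by (simp add: abs_mult mult_mono)
    ultimately show ?thesis by (auto simp: abs_le_iff)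
  qed
  have "?minor \<in> carrier_mat (n - 1) (n - 1)"
    using mat_delete_carrier[OF pencil_carrier] by blast
  then have "\<bar>det ?minor\<bar> \<le> fact (n - 1) * (1 + \<gamma> * smax) ^ (n - 1)"
    using entry by (rule abs_det_le)
  moreover have "\<bar>resolvent n s v $$ (i, j)\<bar> = \<bar>det ?minor\<bar> / pencil_det n s v"
    using c i j by (simp add: resolvent_def adj_mat_def cofactor_def abs_mult)
  ultimately show ?thesis
    using c by (smt (verit, best) frac_le abs_ge_zero)
qed

text \<open>A minimal entry \<open>m < 0\<close> of \<open>X\<close> would satisfy \<open>m \<ge> m \<cdot> (column sum of C) > m\<close>.\<close>

lemma nonneg_mat_fixed_point:
  assumes X: "X \<in> carrier_mat n n" and P: "P \<in> carrier_mat n n" and C: "C \<in> carrier_mat n n"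
    and eq: "X = P + X * C" and P_nonneg: "nonneg_mat n P" and C_nonneg: "nonneg_mat n C"
    and col_sum: "\<And>j. j < n \<Longrightarrow> (\<Sum>l<n. C $$ (l, j)) < 1"
  shows "nonneg_mat n X"
proof (rule ccontr)
  assume "\<not> nonneg_mat n X"
  then obtain i j where ij: "i < n" "j < n" "X $$ (i, j) < 0" by (auto simp: nonneg_mat_def not_le)
  define V where "V = (\<lambda>(i, j). X $$ (i, j)) ` ({..<n} \<times> {..<n})"
  define m where "m = Min V"
  have fin: "finite V" and ne: "V \<noteq> {}" using ij by (auto simp: V_def)
  have "m \<in> V" unfolding m_def using fin ne by (rule Min_in)
  then obtain i0 j0 where i0: "i0 < n" "j0 < n" "m = X $$ (i0, j0)" by (auto simp: V_def)
  have m_le: "m \<le> X $$ (a, b)" if "a < n" "b < n" for a b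
    unfolding m_def using fin that by (intro Min_le) (auto simp: V_def)
  have m_neg: "m < 0" using m_le[OF ij(1,2)] ij(3) by simp
  have "m = (P + X * C) $$ (i0, j0)" using i0(3) eq by simp
  also have "\<dots> = P $$ (i0, j0) + (\<Sum>l<n. X $$ (i0, l) * C $$ (l, j0))"
    using i0 X P C by (simp add: carrier_matD)
  also have "\<dots> \<ge> 0 + (\<Sum>l<n. m * C $$ (l, j0))"
    using i0 P_nonneg C_nonneg m_le by (intro add_mono sum_mono mult_right_mono) (auto simp: nonneg_mat_def)
  finally have "m \<ge> m * (\<Sum>l<n. C $$ (l, j0))" by (simp add: sum_distrib_left)
  moreover have "m * (\<Sum>l<n. C $$ (l, j0)) > m * 1"
    using col_sum[OF i0(2)] m_neg by (intro mult_strict_left_mono_neg) auto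
  ultimately show False by simp
qed

lemma resolvent_nonneg_step:
  assumes s: "\<And>i j. i < n \<Longrightarrow> j < n \<Longrightarrow> 0 \<le> s i j" and vw: "v \<le> w"
    and det_v: "pencil_det n s v \<noteq> 0" and det_w: "pencil_det n s w \<noteq> 0"
    and nonneg_v: "nonneg_mat n (resolvent n s v)"
    and small: "\<And>j. j < n \<Longrightarrow> (w - v) * (\<Sum>l<n. (kernel_mat n s * resolvent n s v) $$ (l, j)) < 1"
  shows "nonneg_mat n (resolvent n s w)"
proof -
  define C where "C = (w - v) \<cdot>\<^sub>m (kernel_mat n s * resolvent n s v)"
  have C_carrier: "C \<in> carrier_mat n n"
    by (simp add: C_def mult_carrier_mat[OF kernel_mat_carrier resolvent_carrier])
  have "(w - v) \<cdot>\<^sub>m (resolvent n s w * kernel_mat n s * resolvent n s v) = resolvent n s w * C"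
    unfolding C_def
    by (simp add: assoc_mult_mat[OF resolvent_carrier kernel_mat_carrier resolvent_carrier]
        mult_smult_distrib[OF resolvent_carrier mult_carrier_mat[OF kernel_mat_carrier resolvent_carrier]])
  then have eq: "resolvent n s w = resolvent n s v + resolvent n s w * C"
    using resolvent_identity[OF det_v det_w] by simp
  have "nonneg_mat n C"
    using nonneg_v s vw by (auto simp: nonneg_mat_def C_def intro!: sum_nonneg mult_nonneg_nonneg)
  moreover have "(\<Sum>l<n. C $$ (l, j)) < 1" if "j < n" for j
    using small[OF that] that by (simp add: C_def sum_distrib_left)
  ultimately show ?thesis
    using nonneg_mat_fixed_point[OF resolvent_carrier resolvent_carrier C_carrier eq nonneg_v] by blast
qed

fun pow_entry :: "nat \<Rightarrow> (nat \<Rightarrow> nat \<Rightarrow> real) \<Rightarrow> nat \<Rightarrow> nat \<Rightarrow> nat \<Rightarrow> real" where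
  "pow_entry n s 0 i j = (if i = j then 1 else 0)"
| "pow_entry n s (Suc l) i j = (\<Sum>m<n. pow_entry n s l i m * s m j)"

definition pow_trace :: "nat \<Rightarrow> (nat \<Rightarrow> nat \<Rightarrow> real) \<Rightarrow> nat \<Rightarrow> real" where
  "pow_trace n s l = (\<Sum>i<n. pow_entry n s l i i)"

lemma pow_entry_nonneg:
  assumes "\<And>i j. i < n \<Longrightarrow> j < n \<Longrightarrow> 0 \<le> s i j" "i < n" "j < n"
  shows "0 \<le> pow_entry n s l i j"
  using assms(2,3) by (induction l arbitrary: j) (auto intro!: sum_nonneg mult_nonneg_nonneg assms(1))

lemma pow_trace_nonneg:
  "(\<And>i j. i < n \<Longrightarrow> j < n \<Longrightarrow> 0 \<le> s i j) \<Longrightarrow> 0 \<le> pow_trace n s l"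
  unfolding pow_trace_def by (intro sum_nonneg) (auto intro: pow_entry_nonneg)

locale pencil_det_lower_bound =
  fixes n :: nat and s :: "nat \<Rightarrow> nat \<Rightarrow> real" and \<gamma> c :: real
  assumes kernel_nonneg: "\<And>i j. i < n \<Longrightarrow> j < n \<Longrightarrow> 0 \<le> s i j"
    and \<gamma>_pos: "0 < \<gamma>" and c_pos: "0 < c"
    and pencil_det_ge: "\<And>v. 0 \<le> v \<Longrightarrow> v \<le> \<gamma> \<Longrightarrow> c \<le> pencil_det n s v"
begin

lemma pencil_det_pos: "0 \<le> v \<Longrightarrow> v \<le> \<gamma> \<Longrightarrow> 0 < pencil_det n s v"
  using pencil_det_ge c_pos by (meson less_le_trans)

lemma pencil_det_nonzero: "0 \<le> v \<Longrightarrow> v \<le> \<gamma> \<Longrightarrow> pencil_det n s v \<noteq> 0"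
  using pencil_det_pos by fastforce

lemma kernel_col_sum_bound:
  obtains L where "0 \<le> L"
    "\<And>u j. 0 \<le> u \<Longrightarrow> u \<le> \<gamma> \<Longrightarrow> j < n \<Longrightarrow> (\<Sum>l<n. (kernel_mat n s * resolvent n s u) $$ (l, j)) \<le> L"
proof
  define smax where "smax = (\<Sum>i<n. \<Sum>j<n. s i j)"
  have s_le: "s i j \<le> smax" if "i < n" "j < n" for i j
  proof -
    have "s i j \<le> (\<Sum>j<n. s i j)" using that kernel_nonneg by (intro member_le_sum) auto
    also have "\<dots> \<le> smax" unfolding smax_def using that kernel_nonneg by (intro member_le_sum sum_nonneg) auto
    finally show ?thesis .
  qed
  have smax_nonneg: "0 \<le> smax" unfolding smax_def using kernel_nonneg by (intro sum_nonneg) auto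
  define K where "K = fact (n - 1) * (1 + \<gamma> * smax) ^ (n - 1) / c"
  have K_nonneg: "0 \<le> K" unfolding K_def using \<gamma>_pos smax_nonneg c_pos by simp
  have K: "\<bar>resolvent n s u $$ (i, j)\<bar> \<le> K" if "0 \<le> u" "u \<le> \<gamma>" "i < n" "j < n" for u i j
    unfolding K_def using that kernel_nonneg s_le pencil_det_ge c_pos by (intro abs_resolvent_le) auto
  show "0 \<le> K * smax" using K_nonneg smax_nonneg by simp
  fix u j assume u: "0 \<le> u" "u \<le> \<gamma>" and j: "j < n"
  have "(\<Sum>l<n. (kernel_mat n s * resolvent n s u) $$ (l, j)) = (\<Sum>l<n. \<Sum>m<n. s l m * resolvent n s u $$ (m, j))"
    using j by simp
  also have "\<dots> \<le> (\<Sum>l<n. \<Sum>m<n. s l m * K)"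
    using u j kernel_nonneg K by (intro sum_mono mult_left_mono) (auto simp: abs_le_iff)
  also have "\<dots> = K * smax" by (simp add: smax_def sum_distrib_left sum_distrib_right mult_ac)
  finally show "(\<Sum>l<n. (kernel_mat n s * resolvent n s u) $$ (l, j)) \<le> K * smax" .
qed

text \<open>Continuation from \<open>v = 0\<close> in steps of a fixed length \<open>\<delta>\<close> small enough for \<open>resolvent_nonneg_step\<close>.\<close>

lemma resolvent_nonneg:
  assumes v: "0 \<le> v" "v \<le> \<gamma>"
  shows "nonneg_mat n (resolvent n s v)"
proof -
  obtain L where L: "0 \<le> L"
    "\<And>u j. 0 \<le> u \<Longrightarrow> u \<le> \<gamma> \<Longrightarrow> j < n \<Longrightarrow> (\<Sum>l<n. (kernel_mat n s * resolvent n s u) $$ (l, j)) \<le> L"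
    using kernel_col_sum_bound by blast
  define \<delta> where "\<delta> = 1 / (L + 1)"
  have \<delta>_pos: "0 < \<delta>" and \<delta>L: "\<delta> * L < 1"
    using L(1) by (auto simp: \<delta>_def divide_less_eq)
  have "nonneg_mat n (resolvent n s u)" if "0 \<le> u" "u \<le> \<gamma>" "u \<le> real m * \<delta>" for m u
    using that
  proof (induction m arbitrary: u)
    case 0
    then show ?case by (simp add: resolvent_zero nonneg_mat_def)
  next
    case (Suc m)
    define u' where "u' = max 0 (u - \<delta>)"
    have u': "0 \<le> u'" "u' \<le> \<gamma>" "u' \<le> real m * \<delta>" "u' \<le> u" "u - u' \<le> \<delta>"
      using Suc.prems \<delta>_pos \<gamma>_pos by (auto simp: u'_def algebra_simps)
    have nonneg': "nonneg_mat n (resolvent n s u')" using Suc.IH u' by blast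
    show ?case
    proof (rule resolvent_nonneg_step[of n s u' u])
      show "pencil_det n s u' \<noteq> 0" "pencil_det n s u \<noteq> 0"
        using pencil_det_nonzero u' Suc.prems by auto
      fix j assume j: "j < n"
      have "0 \<le> (\<Sum>l<n. (kernel_mat n s * resolvent n s u') $$ (l, j))"
        using nonneg' kernel_nonneg j by (intro sum_nonneg) (auto simp: nonneg_mat_def intro!: sum_nonneg)
      then have "(u - u') * (\<Sum>l<n. (kernel_mat n s * resolvent n s u') $$ (l, j)) \<le> \<delta> * L"
        using u' L(2)[OF u'(1,2) j] by (intro mult_mono) auto
      then show "(u - u') * (\<Sum>l<n. (kernel_mat n s * resolvent n s u') $$ (l, j)) < 1"
        using \<delta>L by linarith
    qed (use kernel_nonneg u'(4) nonneg' in auto)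
  qed
  moreover obtain m where "v / \<delta> \<le> real m" by (meson real_arch_simple)
  then have "v \<le> real m * \<delta>" using \<delta>_pos by (simp add: pos_divide_le_eq)
  ultimately show ?thesis using v by blast
qed

lemma resolvent_entry_nonneg: "0 \<le> v \<Longrightarrow> v \<le> \<gamma> \<Longrightarrow> i < n \<Longrightarrow> j < n \<Longrightarrow> 0 \<le> resolvent n s v $$ (i, j)"
  using resolvent_nonneg by (simp add: nonneg_mat_def)

lemma trace_resolvent_kernel:
  "mat_trace (resolvent n s v * kernel_mat n s) = (\<Sum>a<n. \<Sum>l<n. resolvent n s v $$ (a, l) * s l a)"
  unfolding mat_trace_def by (intro sum.cong refl) (auto simp: mult_carrier_mat)

lemma resolvent_mono:
  assumes "0 \<le> v" "v \<le> w" "w \<le> \<gamma>" "a < n" "b < n"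
  shows "resolvent n s v $$ (a, b) \<le> resolvent n s w $$ (a, b)"
proof -
  have "pencil_det n s v \<noteq> 0" "pencil_det n s w \<noteq> 0" using pencil_det_nonzero assms by auto
  then have "resolvent n s w $$ (a, b)
      = resolvent n s v $$ (a, b) + (w - v) * (resolvent n s w * kernel_mat n s * resolvent n s v) $$ (a, b)"
    using assms(4,5) by (subst resolvent_identity) (simp_all add: mult_carrier_mat)
  moreover have "0 \<le> (resolvent n s w * kernel_mat n s * resolvent n s v) $$ (a, b)"
    using assms resolvent_entry_nonneg kernel_nonneg by (auto intro!: sum_nonneg mult_nonneg_nonneg)
  ultimately show ?thesis using assms by simp
qed

lemma trace_resolvent_kernel_nonneg:
  "0 \<le> v \<Longrightarrow> v \<le> \<gamma> \<Longrightarrow> 0 \<le> mat_trace (resolvent n s v * kernel_mat n s)"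
  unfolding trace_resolvent_kernel using resolvent_entry_nonneg kernel_nonneg by (auto intro!: sum_nonneg)

lemma trace_resolvent_kernel_mono:
  "0 \<le> v \<Longrightarrow> v \<le> w \<Longrightarrow> w \<le> \<gamma> \<Longrightarrow>
   mat_trace (resolvent n s v * kernel_mat n s) \<le> mat_trace (resolvent n s w * kernel_mat n s)"
  unfolding trace_resolvent_kernel using resolvent_mono kernel_nonneg by (intro sum_mono mult_right_mono) auto

lemma neg_ln_pencil_det_has_derivative:
  assumes "0 \<le> v" "v \<le> \<gamma>"
  shows "((\<lambda>x. - ln (pencil_det n s x)) has_real_derivative mat_trace (resolvent n s v * kernel_mat n s)) (at v)"
proof -
  have pos: "0 < pencil_det n s v" using pencil_det_pos assms .
  have "((\<lambda>x. ln (pencil_det n s x)) has_real_derivative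
      inverse (pencil_det n s v) * (- pencil_det n s v * mat_trace (resolvent n s v * kernel_mat n s))) (at v)"
    using pos by (intro DERIV_chain2[OF DERIV_ln[OF pos] pencil_det_has_derivative]) simp
  then have "((\<lambda>x. - ln (pencil_det n s x)) has_real_derivative
      - (inverse (pencil_det n s v) * (- pencil_det n s v * mat_trace (resolvent n s v * kernel_mat n s)))) (at v)"
    by (rule DERIV_minus)
  then show ?thesis using pos by (simp add: field_simps)
qed

text \<open>Since \<open>- ln (pencil_det n s)\<close> vanishes at 0, is at most \<open>- ln c\<close> on \<open>[0, \<gamma>]\<close> and has an
  increasing derivative, its derivative at \<open>\<gamma>/2\<close> is at most \<open>(2/\<gamma>) (- ln c)\<close>.\<close>

lemma trace_resolvent_kernel_half_le: "mat_trace (resolvent n s (\<gamma>/2) * kernel_mat n s) \<le> (2/\<gamma>) * (- ln c)"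
proof -
  define \<phi> where "\<phi> x = - ln (pencil_det n s x)" for x
  define \<tau> where "\<tau> v = mat_trace (resolvent n s v * kernel_mat n s)" for v
  have deriv: "0 \<le> v \<Longrightarrow> v \<le> \<gamma> \<Longrightarrow> (\<phi> has_real_derivative \<tau> v) (at v)" for v
    unfolding \<phi>_def[abs_def] \<tau>_def by (rule neg_ln_pencil_det_has_derivative)
  obtain z where z: "\<gamma>/2 < z" "z < \<gamma>" "\<phi> \<gamma> - \<phi> (\<gamma>/2) = (\<gamma> - \<gamma>/2) * \<tau> z"
    using MVT2[of "\<gamma>/2" \<gamma> \<phi> \<tau>] deriv \<gamma>_pos by auto
  obtain z' where z': "0 < z'" "z' < \<gamma>/2" "\<phi> (\<gamma>/2) - \<phi> 0 = (\<gamma>/2 - 0) * \<tau> z'"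
    using MVT2[of 0 "\<gamma>/2" \<phi> \<tau>] deriv \<gamma>_pos by auto
  have "0 \<le> \<tau> z'" unfolding \<tau>_def using z' by (intro trace_resolvent_kernel_nonneg) auto
  then have "0 \<le> (\<gamma>/2 - 0) * \<tau> z'" using \<gamma>_pos by simp
  moreover have "\<phi> 0 = 0" by (simp add: \<phi>_def pencil_det_zero)
  ultimately have \<phi>_half: "0 \<le> \<phi> (\<gamma>/2)" using z'(3) by linarith
  have "\<tau> (\<gamma>/2) \<le> \<tau> z" unfolding \<tau>_def using z \<gamma>_pos by (intro trace_resolvent_kernel_mono) auto
  then have "(\<gamma>/2) * \<tau> (\<gamma>/2) \<le> \<phi> \<gamma> - \<phi> (\<gamma>/2)" using z(3) \<gamma>_pos by simp
  also have "\<dots> \<le> \<phi> \<gamma>" using \<phi>_half by simp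
  also have "\<dots> \<le> - ln c" unfolding \<phi>_def using pencil_det_ge[of \<gamma>] c_pos \<gamma>_pos by simp
  finally have "(\<gamma>/2) * \<tau> (\<gamma>/2) \<le> - ln c" .
  then show ?thesis using \<gamma>_pos by (simp add: \<tau>_def field_simps)
qed

text \<open>Iterating \<open>N = 1 + t S N\<close> (\<open>N\<close> the resolvent at \<open>t\<close>) \<open>j\<close> times and dropping nonnegative terms.\<close>

lemma pow_entry_resolvent_le:
  assumes t: "0 < t" "t \<le> \<gamma>" and ab: "a < n" "b < n"
  shows "t ^ j * (\<Sum>l<n. pow_entry n s j a l * resolvent n s t $$ (l, b)) \<le> resolvent n s t $$ (a, b)"
  using ab(1)
proof (induction j arbitrary: a)
  case 0
  have "(\<Sum>l<n. pow_entry n s 0 a l * resolvent n s t $$ (l, b)) = (\<Sum>l<n. if a = l then resolvent n s t $$ (l, b) else 0)"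
    by (intro sum.cong) auto
  then show ?case using 0 by simp
next
  case (Suc j)
  let ?N = "resolvent n s t"
  have det: "pencil_det n s t \<noteq> 0" using pencil_det_nonzero t by auto
  have "t ^ Suc j * (\<Sum>l<n. pow_entry n s (Suc j) a l * ?N $$ (l, b))
      = t ^ j * (\<Sum>m<n. pow_entry n s j a m * (t * (\<Sum>l<n. s m l * ?N $$ (l, b))))"
  proof -
    have "(\<Sum>l<n. (\<Sum>m<n. pow_entry n s j a m * s m l) * ?N $$ (l, b))
        = (\<Sum>m<n. pow_entry n s j a m * (\<Sum>l<n. s m l * ?N $$ (l, b)))"
      by (simp add: sum_distrib_left sum_distrib_right mult.assoc) (rule sum.swap)
    then show ?thesis by (simp add: sum_distrib_left mult_ac)
  qed
  also have "\<dots> \<le> t ^ j * (\<Sum>m<n. pow_entry n s j a m * ?N $$ (m, b))"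
  proof (rule mult_left_mono[OF sum_mono])
    fix m assume m: "m \<in> {..<n}"
    have "t * (\<Sum>l<n. s m l * ?N $$ (l, b)) \<le> ?N $$ (m, b)"
      using resolvent_eq[OF det, of m b] m ab by auto
    then show "pow_entry n s j a m * (t * (\<Sum>l<n. s m l * ?N $$ (l, b))) \<le> pow_entry n s j a m * ?N $$ (m, b)"
      using pow_entry_nonneg[OF kernel_nonneg] m Suc.prems by (intro mult_left_mono) auto
  qed (use t in auto)
  also have "\<dots> \<le> ?N $$ (a, b)" using Suc by blast
  finally show ?case .
qed

lemma pow_entry_le_resolvent:
  assumes t: "0 < t" "t \<le> \<gamma>" and ab: "a < n" "b < n"
  shows "t ^ j * pow_entry n s j a b \<le> resolvent n s t $$ (a, b)"
proof -
  let ?N = "resolvent n s t"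
  have det: "pencil_det n s t \<noteq> 0" using pencil_det_nonzero t by auto
  have diag_le: "(if l = b then 1 else 0) \<le> ?N $$ (l, b)" if "l < n" for l
    using resolvent_eq[OF det that ab(2)] that ab t resolvent_entry_nonneg kernel_nonneg
    by (auto intro!: mult_nonneg_nonneg sum_nonneg)
  have "pow_entry n s j a b = (\<Sum>l<n. pow_entry n s j a l * (if l = b then 1 else 0))"
    using ab by (simp add: if_distrib[of "\<lambda>x. _ * x"] cong: if_cong)
  also have "\<dots> \<le> (\<Sum>l<n. pow_entry n s j a l * ?N $$ (l, b))"
    using diag_le ab pow_entry_nonneg[OF kernel_nonneg] by (intro sum_mono mult_left_mono) auto
  finally have "t ^ j * pow_entry n s j a b \<le> t ^ j * (\<Sum>l<n. pow_entry n s j a l * ?N $$ (l, b))"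
    using t by (intro mult_left_mono) auto
  also have "\<dots> \<le> ?N $$ (a, b)" using pow_entry_resolvent_le[OF t ab] .
  finally show ?thesis .
qed

lemma pow_trace_le: "(\<gamma>/2) ^ j * pow_trace n s (Suc j) \<le> (2/\<gamma>) * (- ln c)"
proof -
  have "(\<gamma>/2) ^ j * pow_trace n s (Suc j) = (\<Sum>a<n. \<Sum>l<n. ((\<gamma>/2) ^ j * pow_entry n s j a l) * s l a)"
    by (simp add: pow_trace_def sum_distrib_left mult_ac)
  also have "\<dots> \<le> (\<Sum>a<n. \<Sum>l<n. resolvent n s (\<gamma>/2) $$ (a, l) * s l a)"
    using pow_entry_le_resolvent \<gamma>_pos kernel_nonneg by (intro sum_mono mult_right_mono) auto
  also have "\<dots> \<le> (2/\<gamma>) * (- ln c)"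
    using trace_resolvent_kernel_half_le by (simp add: trace_resolvent_kernel)
  finally show ?thesis .
qed

end

section \<open>Sums of principal permanents\<close>

definition perm_pairs :: "nat \<Rightarrow> nat \<Rightarrow> (nat set \<times> (nat \<Rightarrow> nat)) set" where
  "perm_pairs n k = (SIGMA I:{I. I \<subseteq> {..<n} \<and> card I = k}. {p. p permutes I})"

definition perm_weight :: "(nat \<Rightarrow> nat \<Rightarrow> real) \<Rightarrow> nat set \<Rightarrow> (nat \<Rightarrow> nat) \<Rightarrow> real" where
  "perm_weight s I p = (\<Prod>i\<in>I. s i (p i))"

definition principal_permanent_sum :: "nat \<Rightarrow> (nat \<Rightarrow> nat \<Rightarrow> real) \<Rightarrow> nat \<Rightarrow> real" where
  "principal_permanent_sum n s k = (\<Sum>(I, p)\<in>perm_pairs n k. perm_weight s I p)"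

definition cycle_weight :: "(nat \<Rightarrow> nat \<Rightarrow> real) \<Rightarrow> nat \<Rightarrow> (nat \<Rightarrow> nat) \<Rightarrow> real" where
  "cycle_weight s l c = (\<Prod>a<l. s (c a) (c (Suc a mod l)))"

lemma finite_perm_pairs: "finite (perm_pairs n k)"
  unfolding perm_pairs_def
  by (rule finite_SigmaI) (auto intro: finite_subset[of _ "Pow {..<n}"] finite_permutations finite_subset[of _ "{..<n}"])

lemma perm_pairs_zero: "perm_pairs n 0 = {({}, id)}"
proof
  show "perm_pairs n 0 \<subseteq> {({}, id)}"
  proof clarify
    fix I p assume "(I, p) \<in> perm_pairs n 0"
    then have "I \<subseteq> {..<n}" "card I = 0" "p permutes I" by (auto simp: perm_pairs_def)
    then show "I = {} \<and> p = id" using finite_subset[of I "{..<n}"] by (auto simp: permutes_empty)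
  qed
qed (auto simp: perm_pairs_def permutes_id)

lemma perm_weight_nonneg:
  "(\<And>i j. i < n \<Longrightarrow> j < n \<Longrightarrow> 0 \<le> s i j) \<Longrightarrow> (I, p) \<in> perm_pairs n k \<Longrightarrow> 0 \<le> perm_weight s I p"
  unfolding perm_weight_def perm_pairs_def by (auto intro!: prod_nonneg dest: permutes_in_image)

lemma principal_permanent_sum_nonneg:
  "(\<And>i j. i < n \<Longrightarrow> j < n \<Longrightarrow> 0 \<le> s i j) \<Longrightarrow> 0 \<le> principal_permanent_sum n s k"
  unfolding principal_permanent_sum_def by (intro sum_nonneg) (auto intro: perm_weight_nonneg)

lemma principal_permanent_sum_zero: "principal_permanent_sum n s 0 = 1"
  by (simp add: principal_permanent_sum_def perm_pairs_zero perm_weight_def)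

lemma cycle_weight_nonneg:
  assumes s: "\<And>i j. i < n \<Longrightarrow> j < n \<Longrightarrow> 0 \<le> s i j" and l: "0 < l" and c: "c \<in> {..<l} \<rightarrow>\<^sub>E {..<n}"
  shows "0 \<le> cycle_weight s l c"
  unfolding cycle_weight_def
proof (intro prod_nonneg ballI s)
  fix a assume "a \<in> {..<l}"
  moreover have "Suc a mod l < l" using l by simp
  ultimately show "c a < n" "c (Suc a mod l) < n" using c by (auto simp: PiE_def Pi_def)
qed

lemma sum_walks_eq_pow_entry:
  assumes "0 < l" "i < n"
  shows "(\<Sum>c\<in>{c\<in>{..<l} \<rightarrow>\<^sub>E {..<n}. c 0 = i}. \<Prod>a<l. s (c a) (if Suc a < l then c (Suc a) else j))
         = pow_entry n s l i j"
  using assms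
proof (induction l arbitrary: j)
  case 0
  then show ?case by simp
next
  case (Suc l)
  define A where "A l' = {c\<in>{..<l'} \<rightarrow>\<^sub>E {..<n}. c 0 = i}" for l' :: nat
  show ?case
  proof (cases "l = 0")
    case True
    have "A (Suc 0) = {restrict (\<lambda>_. i) {..<Suc 0}}"
      using Suc.prems by (auto simp: A_def PiE_def extensional_def fun_eq_iff)
    then show ?thesis using True Suc.prems by (simp add: A_def if_distrib[of "\<lambda>x. x * _"] cong: if_cong)
  next
    case False
    define P where "P c m = (\<Prod>a<l. s (c a) (if Suc a < l then c (Suc a) else m))" for c m
    have "(\<Sum>(c, m)\<in>A l \<times> {..<n}. P c m * s m j)
        = (\<Sum>c\<in>A (Suc l). \<Prod>a<Suc l. s (c a) (if Suc a < Suc l then c (Suc a) else j))"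
    proof (rule sum.reindex_bij_witness[of _ "\<lambda>c. (restrict c {..<l}, c l)" "\<lambda>(c, m). c(l := m)"])
      fix cm assume cm: "cm \<in> A l \<times> {..<n}"
      then obtain c m where [simp]: "cm = (c, m)" and c: "c \<in> {..<l} \<rightarrow>\<^sub>E {..<n}" "c 0 = i" "m < n"
        by (auto simp: A_def)
      show "(case cm of (c, m) \<Rightarrow> c(l := m)) \<in> A (Suc l)"
        using c False by (auto simp: A_def PiE_def extensional_def Pi_def)
      show "(restrict (case cm of (c, m) \<Rightarrow> c(l := m)) {..<l}, (case cm of (c, m) \<Rightarrow> c(l := m)) l) = cm"
        using c by (auto simp: PiE_def extensional_def fun_eq_iff)
      have "(\<Prod>a<l. s ((c(l := m)) a) (if Suc a < Suc l then (c(l := m)) (Suc a) else j)) = P c m"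
        unfolding P_def by (intro prod.cong) auto
      then show "(\<Prod>a<Suc l. s ((case cm of (c, m) \<Rightarrow> c(l := m)) a)
              (if Suc a < Suc l then (case cm of (c, m) \<Rightarrow> c(l := m)) (Suc a) else j))
          = (case cm of (c, m) \<Rightarrow> P c m * s m j)"
        by (simp add: prod.lessThan_Suc)
    next
      fix c assume c: "c \<in> A (Suc l)"
      show "(restrict c {..<l}, c l) \<in> A l \<times> {..<n}"
        using c False by (auto simp: A_def PiE_def extensional_def Pi_def)
      show "(case (restrict c {..<l}, c l) of (c, m) \<Rightarrow> c(l := m)) = c"
        using c by (auto simp: A_def PiE_def extensional_def fun_eq_iff)
    qed
    then have "(\<Sum>c\<in>A (Suc l). \<Prod>a<Suc l. s (c a) (if Suc a < Suc l then c (Suc a) else j))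
        = (\<Sum>(c, m)\<in>A l \<times> {..<n}. P c m * s m j)" by simp
    also have "\<dots> = (\<Sum>m<n. (\<Sum>c\<in>A l. P c m) * s m j)"
      by (simp add: sum.cartesian_product[symmetric] sum_distrib_right sum.swap[of _ "A l"])
    also have "\<dots> = pow_entry n s (Suc l) i j"
      using Suc.IH False Suc.prems by (simp add: A_def P_def)
    finally show ?thesis by (simp add: A_def)
  qed
qed

lemma sum_cycle_weight_eq_pow_trace:
  assumes "0 < l"
  shows "(\<Sum>c\<in>{..<l} \<rightarrow>\<^sub>E {..<n}. cycle_weight s l c) = pow_trace n s l"
proof -
  have "(\<Sum>c\<in>{..<l} \<rightarrow>\<^sub>E {..<n}. cycle_weight s l c)
      = (\<Sum>i<n. \<Sum>c\<in>{c\<in>{..<l} \<rightarrow>\<^sub>E {..<n}. c 0 = i}. cycle_weight s l c)"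
    using assms by (intro sum.group[symmetric]) (auto simp: finite_PiE)
  also have "\<dots> = (\<Sum>i<n. pow_entry n s l i i)"
  proof (intro sum.cong refl)
    fix i assume i: "i \<in> {..<n}"
    have "cycle_weight s l c = (\<Prod>a<l. s (c a) (if Suc a < l then c (Suc a) else i))" if "c 0 = i" for c
      unfolding cycle_weight_def
    proof (intro prod.cong refl)
      fix a assume "a \<in> {..<l}"
      then have "Suc a = l \<or> Suc a < l" by auto
      then have "Suc a mod l = (if Suc a < l then Suc a else 0)" by auto
      then show "s (c a) (c (Suc a mod l)) = s (c a) (if Suc a < l then c (Suc a) else i)"
        using that by auto
    qed
    then show "(\<Sum>c\<in>{c\<in>{..<l} \<rightarrow>\<^sub>E {..<n}. c 0 = i}. cycle_weight s l c) = pow_entry n s l i i"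
      using sum_walks_eq_pow_entry[OF assms, of i n s i] i by simp
  qed
  finally show ?thesis by (simp add: pow_trace_def)
qed

definition min_cycle_length :: "(nat \<Rightarrow> nat) \<Rightarrow> nat set \<Rightarrow> nat" where
  "min_cycle_length p I = funpow_dist1 p (Min I) (Min I)"

definition min_cycle :: "(nat \<Rightarrow> nat) \<Rightarrow> nat set \<Rightarrow> nat set" where
  "min_cycle p I = orbit p (Min I)"

lemma min_cycle_length_pos: "0 < min_cycle_length p I"
  by (simp add: min_cycle_length_def)

context
  fixes I :: "nat set" and p :: "nat \<Rightarrow> nat"
  assumes p_permutes: "p permutes I" and I_finite: "finite I" and I_nonempty: "I \<noteq> {}"
begin

private lemma Min_in_orbit: "Min I \<in> orbit p (Min I)"
  using p_permutes I_finite by (intro permutation_self_in_orbit) (auto simp: permutation_permutes)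

lemma min_cycle_eq_image: "min_cycle p I = (\<lambda>a. (p ^^ a) (Min I)) ` {..<min_cycle_length p I}"
  unfolding min_cycle_def min_cycle_length_def orbit_conv_funpow_dist1[OF Min_in_orbit]
  by (simp add: atLeast0LessThan)

lemma inj_on_min_cycle: "inj_on (\<lambda>a. (p ^^ a) (Min I)) {..<min_cycle_length p I}"
  using inj_on_funpow_dist1[OF Min_in_orbit] by (simp add: min_cycle_length_def atLeast0LessThan)

lemma min_cycle_subset: "min_cycle p I \<subseteq> I"
  unfolding min_cycle_def using p_permutes I_finite I_nonempty by (intro permutes_orbit_subset) auto

lemma card_min_cycle: "card (min_cycle p I) = min_cycle_length p I"
  using min_cycle_eq_image inj_on_min_cycle by (simp add: card_image)

lemma permutes_outside_min_cycle: "perm_restrict p (I - min_cycle p I) permutes (I - min_cycle p I)"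
  unfolding min_cycle_def
  using p_permutes I_finite by (intro perm_restrict_diff_cyclic cyclic_on_orbit') (auto simp: permutation_permutes)

lemma min_cycle_step:
  assumes "a < min_cycle_length p I"
  shows "p ((p ^^ a) (Min I)) = (p ^^ (Suc a mod min_cycle_length p I)) (Min I)"
proof (cases "Suc a < min_cycle_length p I")
  case False
  then have "Suc a = min_cycle_length p I" using assms by simp
  moreover have "(p ^^ min_cycle_length p I) (Min I) = Min I"
    unfolding min_cycle_length_def by (rule funpow_dist1_prop[OF Min_in_orbit])
  ultimately show ?thesis by (metis funpow.simps(2) mod_self o_apply funpow_0)
qed simp

end

text \<open>Splitting off the cycle through the least element of \<open>I\<close>, listed from that element.\<close>

definition split_min_cycle :: "nat set \<times> (nat \<Rightarrow> nat) \<Rightarrow> nat \<times> (nat \<Rightarrow> nat) \<times> nat set \<times> (nat \<Rightarrow> nat)" where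
  "split_min_cycle = (\<lambda>(I, p). (min_cycle_length p I, restrict (\<lambda>a. (p ^^ a) (Min I)) {..<min_cycle_length p I},
     I - min_cycle p I, perm_restrict p (I - min_cycle p I)))"

lemma perm_pairs_D:
  assumes "(I, p) \<in> perm_pairs n k" "0 < k"
  shows "p permutes I" "finite I" "I \<noteq> {}" "I \<subseteq> {..<n}" "card I = k"
  using assms finite_subset[of I "{..<n}"] by (auto simp: perm_pairs_def)

lemma split_min_cycle_in:
  assumes Ip: "(I, p) \<in> perm_pairs n k" and k: "0 < k"
  shows "split_min_cycle (I, p) \<in> (SIGMA l:{1..k}. ({..<l} \<rightarrow>\<^sub>E {..<n}) \<times> perm_pairs n (k - l))"
proof -
  note I = perm_pairs_D[OF Ip k]
  define L where "L = min_cycle_length p I"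
  have "L \<in> {1..k}"
    using card_mono[OF I(2) min_cycle_subset[OF I(1-3)]] card_min_cycle[OF I(1-3)] I(5)
      min_cycle_length_pos[of p I] by (simp add: L_def)
  moreover have "restrict (\<lambda>a. (p ^^ a) (Min I)) {..<L} \<in> {..<L} \<rightarrow>\<^sub>E {..<n}"
    using min_cycle_eq_image[OF I(1-3)] min_cycle_subset[OF I(1-3)] I(4) by (auto simp: L_def PiE_def Pi_def)
  moreover have "(I - min_cycle p I, perm_restrict p (I - min_cycle p I)) \<in> perm_pairs n (k - L)"
    using I min_cycle_subset[OF I(1-3)] card_min_cycle[OF I(1-3)] permutes_outside_min_cycle[OF I(1-3)]
    by (auto simp: perm_pairs_def L_def card_Diff_subset finite_subset)
  ultimately show ?thesis by (simp add: split_min_cycle_def L_def)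
qed

lemma inj_on_split_min_cycle:
  assumes k: "0 < k"
  shows "inj_on split_min_cycle (perm_pairs n k)"
proof (rule inj_onI, clarify)
  fix I1 p1 I2 p2
  assume x1: "(I1, p1) \<in> perm_pairs n k" and x2: "(I2, p2) \<in> perm_pairs n k"
    and eq: "split_min_cycle (I1, p1) = split_min_cycle (I2, p2)"
  note F1 = perm_pairs_D[OF x1 k] and F2 = perm_pairs_D[OF x2 k]
  define L where "L = min_cycle_length p1 I1"
  define c where "c = restrict (\<lambda>a. (p1 ^^ a) (Min I1)) {..<L}"
  have L2: "min_cycle_length p2 I2 = L" and c2: "restrict (\<lambda>a. (p2 ^^ a) (Min I2)) {..<L} = c"
    and rest: "I2 - min_cycle p2 I2 = I1 - min_cycle p1 I1"
    and p_rest: "perm_restrict p2 (I2 - min_cycle p2 I2) = perm_restrict p1 (I1 - min_cycle p1 I1)"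
    using eq by (auto simp: split_min_cycle_def L_def c_def)
  have cyc1: "min_cycle p1 I1 = c ` {..<L}"
    using min_cycle_eq_image[OF F1(1-3)] by (simp add: c_def L_def)
  have cyc: "min_cycle p1 I1 = min_cycle p2 I2"
    using min_cycle_eq_image[OF F2(1-3)] L2 c2[symmetric] cyc1 by (auto simp: image_def)
  have II: "I1 = I2"
    using min_cycle_subset[OF F1(1-3)] min_cycle_subset[OF F2(1-3)] rest cyc by blast
  have "p1 x = p2 x" for x
  proof (cases "x \<in> I1")
    case False
    then show ?thesis using II F1(1) F2(1) by (simp add: permutes_not_in)
  next
    case xI: True
    show ?thesis
    proof (cases "x \<in> min_cycle p1 I1")
      case False
      then have "p1 x = perm_restrict p1 (I1 - min_cycle p1 I1) x" using xI by (simp add: perm_restrict_simps)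
      also have "\<dots> = p2 x" using p_rest False xI II cyc by (metis DiffI perm_restrict_simps(1))
      finally show ?thesis .
    next
      case True
      then obtain a where a: "a < L" "x = c a" using cyc1 by auto
      have "p1 x = c (Suc a mod L)"
        using min_cycle_step[OF F1(1-3), of a] a by (simp add: c_def L_def)
      also have "\<dots> = p2 x"
        using min_cycle_step[OF F2(1-3), of a] a L2 c2[symmetric] by simp
      finally show ?thesis .
    qed
  qed
  then show "I1 = I2 \<and> p1 = p2" using II by auto
qed

lemma weight_split_min_cycle:
  assumes Ip: "(I, p) \<in> perm_pairs n k" and k: "0 < k"
  shows "(case split_min_cycle (I, p) of (l, c, I', p') \<Rightarrow> cycle_weight s l c * perm_weight s I' p')
    = perm_weight s I p"
proof -
  note F = perm_pairs_D[OF Ip k]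
  define L where "L = min_cycle_length p I"
  have "perm_weight s I p = (\<Prod>i\<in>I - min_cycle p I. s i (p i)) * (\<Prod>i\<in>min_cycle p I. s i (p i))"
    unfolding perm_weight_def by (rule prod.subset_diff[OF min_cycle_subset[OF F(1-3)] F(2)])
  also have "(\<Prod>i\<in>I - min_cycle p I. s i (p i)) = perm_weight s (I - min_cycle p I) (perm_restrict p (I - min_cycle p I))"
    unfolding perm_weight_def by (intro prod.cong refl) (simp add: perm_restrict_simps)
  also have "(\<Prod>i\<in>min_cycle p I. s i (p i)) = (\<Prod>a<L. s ((p ^^ a) (Min I)) (p ((p ^^ a) (Min I))))"
    unfolding min_cycle_eq_image[OF F(1-3)] L_def by (rule prod.reindex[OF inj_on_min_cycle[OF F(1-3)], unfolded comp_def])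
  also have "\<dots> = cycle_weight s L (restrict (\<lambda>a. (p ^^ a) (Min I)) {..<L})"
    unfolding cycle_weight_def L_def using min_cycle_step[OF F(1-3)] min_cycle_length_pos[of p I]
    by (intro prod.cong refl) auto
  finally show ?thesis by (simp add: split_min_cycle_def L_def)
qed

lemma principal_permanent_sum_le:
  assumes s: "\<And>i j. i < n \<Longrightarrow> j < n \<Longrightarrow> 0 \<le> s i j" and k: "0 < k"
  shows "principal_permanent_sum n s k
    \<le> (\<Sum>l\<in>{1..k}. pow_trace n s l * principal_permanent_sum n s (k - l))"
proof -
  define G where "G = (SIGMA l:{1..k}. ({..<l} \<rightarrow>\<^sub>E {..<n}) \<times> perm_pairs n (k - l))"
  define w where "w = (\<lambda>(l, c, I', p'). cycle_weight s l c * perm_weight s I' p')"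
  have finite_G: "finite G" unfolding G_def
    by (intro finite_SigmaI finite_cartesian_product finite_PiE finite_perm_pairs) auto
  have "principal_permanent_sum n s k = (\<Sum>x\<in>perm_pairs n k. w (split_min_cycle x))"
    unfolding principal_permanent_sum_def w_def using weight_split_min_cycle[OF _ k]
    by (intro sum.cong refl) auto
  also have "\<dots> = (\<Sum>y\<in>split_min_cycle ` perm_pairs n k. w y)"
    by (simp add: sum.reindex[OF inj_on_split_min_cycle[OF k]])
  also have "\<dots> \<le> (\<Sum>y\<in>G. w y)"
  proof (rule sum_mono2[OF finite_G])
    show "split_min_cycle ` perm_pairs n k \<subseteq> G"
    proof (rule image_subsetI)
      fix x assume "x \<in> perm_pairs n k"
      then show "split_min_cycle x \<in> G" unfolding G_def using split_min_cycle_in[OF _ k] by (cases x) blast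
    qed
    show "0 \<le> w y" if "y \<in> G - split_min_cycle ` perm_pairs n k" for y
      using that cycle_weight_nonneg[OF s] perm_weight_nonneg[OF s] by (auto simp: G_def w_def)
  qed
  also have "\<dots> = (\<Sum>l\<in>{1..k}. \<Sum>z\<in>({..<l} \<rightarrow>\<^sub>E {..<n}) \<times> perm_pairs n (k - l). w (l, z))"
    unfolding G_def by (subst sum.Sigma) (auto intro: finite_cartesian_product finite_PiE finite_perm_pairs)
  also have "\<dots> = (\<Sum>l\<in>{1..k}. pow_trace n s l * principal_permanent_sum n s (k - l))"
  proof (rule sum.cong[OF refl])
    fix l assume l: "l \<in> {1..k}"
    have "(\<Sum>z\<in>({..<l} \<rightarrow>\<^sub>E {..<n}) \<times> perm_pairs n (k - l). w (l, z))
        = (\<Sum>c\<in>{..<l} \<rightarrow>\<^sub>E {..<n}. \<Sum>x\<in>perm_pairs n (k - l). cycle_weight s l c * (case x of (I', p') \<Rightarrow> perm_weight s I' p'))"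
      by (subst sum.cartesian_product) (auto simp: w_def intro!: sum.cong)
    also have "\<dots> = (\<Sum>c\<in>{..<l} \<rightarrow>\<^sub>E {..<n}. cycle_weight s l c) * principal_permanent_sum n s (k - l)"
      by (simp add: principal_permanent_sum_def sum_product)
    also have "\<dots> = pow_trace n s l * principal_permanent_sum n s (k - l)"
      using l by (simp add: sum_cycle_weight_eq_pow_trace)
    finally show "(\<Sum>z\<in>({..<l} \<rightarrow>\<^sub>E {..<n}) \<times> perm_pairs n (k - l). w (l, z))
        = pow_trace n s l * principal_permanent_sum n s (k - l)" .
  qed
  finally show ?thesis .
qed

lemma detI_eq_pencil_det: "detI {..<n} (\<lambda>i j. (if i = j then 1 else 0) - v * s i j) = pencil_det n s v"
proof -
  have "pencil_det n s v = (\<Sum>p\<in>{p. p permutes {..<n}}. of_int (sign p) * (\<Prod>i\<in>{..<n}. pencil n s v $$ (i, p i)))"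
    unfolding pencil_det_def det_def'[OF pencil_carrier] by (simp add: atLeast0LessThan)
  also have "\<dots> = (\<Sum>p\<in>{p. p permutes {..<n}}. of_int (sign p) * (\<Prod>i\<in>{..<n}. (if i = p i then 1 else 0) - v * s i (p i)))"
  proof (intro sum.cong refl arg_cong2[where f="(*)"] prod.cong)
    fix p i assume "p \<in> {p. p permutes {..<n}}" "i \<in> {..<n}"
    then have "p i < n" by (auto dest: permutes_in_image)
    then show "pencil n s v $$ (i, p i) = (if i = p i then 1 else 0) - v * s i (p i)"
      using \<open>i \<in> {..<n}\<close> by simp
  qed
  finally show ?thesis by (simp add: detI_def)
qed

lemma assumption2_pencil_det_lower_bound:
  assumes "assumption2 S"
  obtains c N where "0 < c" "\<And>n v. N \<le> n \<Longrightarrow> 0 \<le> v \<Longrightarrow> v \<le> 1/2 \<Longrightarrow> c \<le> pencil_det n (S n) v"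
proof -
  define g where "g n v = detI {..<n} (\<lambda>i j. (if i = j then 1 else 0) - v * S n i j)" for n v
  have "liminf (\<lambda>n. ereal (Inf (g n ` {0..1/2}))) > 0"
    using assms unfolding assumption2_def g_def by (drule_tac x="1/2" in spec) simp
  then obtain c where c: "0 < ereal c" "ereal c < liminf (\<lambda>n. ereal (Inf (g n ` {0..1/2})))"
    using ereal_dense2 by force
  have "eventually (\<lambda>n. ereal c < ereal (Inf (g n ` {0..1/2}))) sequentially"
    by (rule less_LiminfD[OF c(2)])
  then obtain N where N: "\<And>n. n \<ge> N \<Longrightarrow> c < Inf (g n ` {0..1/2})"
    by (auto simp: eventually_sequentially)
  show ?thesis
  proof (rule that)
    show "0 < c" using c(1) by simp
    fix n :: nat and v :: real assume n: "N \<le> n" and v: "0 \<le> v" "v \<le> 1/2"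
    have "continuous_on {0..1/2} (g n)"
      unfolding g_def detI_def by (intro continuous_intros)
    then have "bdd_below (g n ` {0..1/2})"
      by (intro bounded_imp_bdd_below compact_imp_bounded compact_continuous_image compact_Icc)
    then have "Inf (g n ` {0..1/2}) \<le> g n v" using v by (intro cInf_lower) auto
    then show "c \<le> pencil_det n (S n) v" using N[OF n] by (simp add: g_def detI_eq_pencil_det)
  qed
qed

lemma principal_permanent_sum_eventually_bounded:
  assumes S_nonneg: "\<And>n i j. i < n \<Longrightarrow> j < n \<Longrightarrow> 0 \<le> S n i j" and c: "0 < c"
    and det_ge: "\<And>n v. N \<le> n \<Longrightarrow> 0 \<le> v \<Longrightarrow> v \<le> 1/2 \<Longrightarrow> c \<le> pencil_det n (S n) v"
  shows "\<exists>R. \<forall>n\<ge>N. principal_permanent_sum n (S n) k \<le> R"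
proof (induction k rule: less_induct)
  case (less k)
  define C where "C l = 4 ^ (l - 1) * (4 * (- ln c))" for l :: nat
  have trace_le: "pow_trace n (S n) l \<le> C l" if n: "N \<le> n" and l: "1 \<le> l" for n l
  proof -
    interpret pencil_det_lower_bound n "S n" "1/2" c
      by unfold_locales (use S_nonneg c det_ge[OF n] in auto)
    have "(1/4) ^ (l - 1) * pow_trace n (S n) l \<le> 4 * (- ln c)"
      using pow_trace_le[of "l - 1"] l by simp
    then have "4 ^ (l - 1) * ((1/4) ^ (l - 1) * pow_trace n (S n) l) \<le> C l"
      unfolding C_def by (intro mult_left_mono) auto
    then show ?thesis by (simp add: power_one_over mult.assoc[symmetric])
  qed
  have C_nonneg: "0 \<le> C l" if "1 \<le> l" for l
  proof -
    have "0 \<le> pow_trace N (S N) l" by (rule pow_trace_nonneg) (fact S_nonneg)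
    then show ?thesis using trace_le[of N l] that by simp
  qed
  show ?case
  proof (cases "k = 0")
    case True
    then show ?thesis by (auto simp: principal_permanent_sum_zero)
  next
    case False
    have "\<forall>j\<in>{..<k}. \<exists>R. \<forall>n\<ge>N. principal_permanent_sum n (S n) j \<le> R"
      using less by blast
    from bchoice[OF this] obtain R
      where R: "\<And>j n. j < k \<Longrightarrow> N \<le> n \<Longrightarrow> principal_permanent_sum n (S n) j \<le> R j"
      by auto
    have "principal_permanent_sum n (S n) k \<le> (\<Sum>l\<in>{1..k}. C l * R (k - l))" if n: "N \<le> n" for n
    proof -
      have "principal_permanent_sum n (S n) k
          \<le> (\<Sum>l\<in>{1..k}. pow_trace n (S n) l * principal_permanent_sum n (S n) (k - l))"
        using False by (intro principal_permanent_sum_le) (simp_all add: S_nonneg)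
      also have "\<dots> \<le> (\<Sum>l\<in>{1..k}. C l * R (k - l))"
      proof (intro sum_mono mult_mono)
        fix l assume l: "l \<in> {1..k}"
        show "pow_trace n (S n) l \<le> C l" using trace_le[OF n] l by simp
        show "principal_permanent_sum n (S n) (k - l) \<le> R (k - l)" using R[OF _ n] l by simp
        show "0 \<le> C l" using C_nonneg l by simp
        show "0 \<le> principal_permanent_sum n (S n) (k - l)"
          by (rule principal_permanent_sum_nonneg) (fact S_nonneg)
      qed
      finally show ?thesis .
    qed
    then show ?thesis by blast
  qed
qed

lemma principal_permanent_sum_bounded:
  assumes "\<And>n i j. i < n \<Longrightarrow> j < n \<Longrightarrow> 0 \<le> S n i j" and "assumption2 S"
  obtains B where "\<And>n. principal_permanent_sum n (S n) k \<le> B"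
proof -
  obtain c N where c: "0 < c"
    and det_ge: "\<And>n v. N \<le> n \<Longrightarrow> 0 \<le> v \<Longrightarrow> v \<le> 1/2 \<Longrightarrow> c \<le> pencil_det n (S n) v"
    using assumption2_pencil_det_lower_bound[OF assms(2)] by metis
  obtain R where R: "\<And>n. N \<le> n \<Longrightarrow> principal_permanent_sum n (S n) k \<le> R"
    using principal_permanent_sum_eventually_bounded[of S c N k, OF assms(1) c det_ge] by auto
  define B where "B = max R (Max ((\<lambda>n. principal_permanent_sum n (S n) k) ` {..<N}))"
  have "principal_permanent_sum n (S n) k \<le> B" for n
  proof (cases "N \<le> n")
    case True
    then show ?thesis using R[OF True] unfolding B_def by simp
  next
    case False
    then have "principal_permanent_sum n (S n) k \<le> Max ((\<lambda>n. principal_permanent_sum n (S n) k) ` {..<N})"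
      by (intro Max_ge) auto
    then show ?thesis unfolding B_def by linarith
  qed
  then show ?thesis using that by blast
qed

section \<open>Moments of products of i.i.d. entries\<close>

lemma borel_measurable_cnj [measurable]:
  "f \<in> borel_measurable M \<Longrightarrow> (\<lambda>x. cnj (f x :: complex)) \<in> borel_measurable M"
  using measurable_compose[of f M borel cnj borel] borel_measurable_continuous_onI[OF continuous_on_cnj[OF continuous_on_id]]
  by simp

definition borel_linear_growth :: "real \<Rightarrow> (complex \<Rightarrow> complex) \<Rightarrow> bool" where
  "borel_linear_growth M a \<longleftrightarrow> a \<in> borel_measurable borel \<and> (\<forall>z. cmod (a z) \<le> cmod z + M)"

lemma borel_linear_growth_id: "0 \<le> M \<Longrightarrow> borel_linear_growth M (\<lambda>z. z)"
  by (simp add: borel_linear_growth_def)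

lemma prod_if_mult_if:
  fixes f g :: "'a \<Rightarrow> 'b::comm_monoid_mult"
  assumes "finite A" "finite B"
  shows "(\<Prod>e\<in>A \<union> B. (if e \<in> A then f e else 1) * (if e \<in> B then g e else 1)) = prod f A * prod g B"
proof -
  have fin: "finite (A \<union> B)" using assms by simp
  have "(\<Prod>e\<in>A \<union> B. if e \<in> A then f e else 1) = prod f ((A \<union> B) \<inter> A)"
    "(\<Prod>e\<in>A \<union> B. if e \<in> B then g e else 1) = prod g ((A \<union> B) \<inter> B)"
    by (simp_all only: prod.inter_restrict[OF fin])
  moreover have "(A \<union> B) \<inter> A = A" "(A \<union> B) \<inter> B = B" by blast+
  ultimately show ?thesis by (simp add: prod.distrib)
qed

locale iid_entries = prob_space Pr for Pr :: "'s measure" +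
  fixes W :: "nat \<Rightarrow> nat \<Rightarrow> 's \<Rightarrow> complex"
  assumes entry_measurable [measurable]: "\<And>i j. W i j \<in> borel_measurable Pr"
    and entries_indep: "indep_vars (\<lambda>_. borel) (\<lambda>(i, j). W i j) UNIV"
    and entries_ident: "\<And>i j. distr Pr borel (W i j) = distr Pr borel (W 0 0)"
    and integrable_entry: "integrable Pr (W 0 0)"
    and entry_mean: "integral\<^sup>L Pr (W 0 0) = 0"
    and integrable_entry_sq: "integrable Pr (\<lambda>\<omega>. (cmod (W 0 0 \<omega>))\<^sup>2)"
    and entry_second_moment: "integral\<^sup>L Pr (\<lambda>\<omega>. (cmod (W 0 0 \<omega>))\<^sup>2) = 1"
begin

definition cross_moment :: "(complex \<Rightarrow> complex) \<Rightarrow> (complex \<Rightarrow> complex) \<Rightarrow> complex" where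
  "cross_moment a b = integral\<^sup>L Pr (\<lambda>\<omega>. a (W 0 0 \<omega>) * cnj (b (W 0 0 \<omega>)))"

lemma integral_entry_fun:
  assumes g: "g \<in> borel_measurable borel"
  shows "integral\<^sup>L Pr (\<lambda>\<omega>. g (W i j \<omega>)) = (integral\<^sup>L Pr (\<lambda>\<omega>. g (W 0 0 \<omega>)) :: complex)"
  using integral_distr[OF entry_measurable[of i j] g] integral_distr[OF entry_measurable[of 0 0] g]
    entries_ident[of i j] by simp

lemma integrable_entry_fun_iff:
  assumes g: "g \<in> borel_measurable borel"
  shows "integrable Pr (\<lambda>\<omega>. g (W i j \<omega>)) \<longleftrightarrow> integrable Pr (\<lambda>\<omega>. (g (W 0 0 \<omega>) :: complex))"
  using integrable_distr_eq[OF entry_measurable[of i j] g] integrable_distr_eq[OF entry_measurable[of 0 0] g]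
    entries_ident[of i j] by simp

lemma integrable_linear_growth:
  assumes a: "borel_linear_growth M a" and M: "0 \<le> M"
  shows "integrable Pr (\<lambda>\<omega>. a (W i j \<omega>))"
proof -
  have am: "a \<in> borel_measurable borel" using a by (simp add: borel_linear_growth_def)
  have "integrable Pr (\<lambda>\<omega>. a (W 0 0 \<omega>))"
  proof (rule Bochner_Integration.integrable_bound[where f="\<lambda>\<omega>. cmod (W 0 0 \<omega>) + M"])
    show "integrable Pr (\<lambda>\<omega>. cmod (W 0 0 \<omega>) + M)" using integrable_entry by auto
    show "(\<lambda>\<omega>. a (W 0 0 \<omega>)) \<in> borel_measurable Pr"
      using am by measurable
    show "AE \<omega> in Pr. norm (a (W 0 0 \<omega>)) \<le> norm (cmod (W 0 0 \<omega>) + M)"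
      using a M by (intro AE_I2) (simp add: borel_linear_growth_def)
  qed
  then show ?thesis by (subst integrable_entry_fun_iff[OF am])
qed

lemma integrable_linear_growth_cnj:
  assumes a: "borel_linear_growth M a" and b: "borel_linear_growth M b" and M: "0 \<le> M"
  shows "integrable Pr (\<lambda>\<omega>. a (W i j \<omega>) * cnj (b (W i j \<omega>)))"
proof -
  have am: "a \<in> borel_measurable borel" and bm: "b \<in> borel_measurable borel"
    using a b by (simp_all add: borel_linear_growth_def)
  have g: "(\<lambda>z. a z * cnj (b z)) \<in> borel_measurable borel" using am bm by measurable
  have "integrable Pr (\<lambda>\<omega>. a (W 0 0 \<omega>) * cnj (b (W 0 0 \<omega>)))"
  proof (rule Bochner_Integration.integrable_bound[where f="\<lambda>\<omega>. 2 * (cmod (W 0 0 \<omega>))\<^sup>2 + 2 * M\<^sup>2"])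
    show "integrable Pr (\<lambda>\<omega>. 2 * (cmod (W 0 0 \<omega>))\<^sup>2 + 2 * M\<^sup>2)" using integrable_entry_sq by auto
    show "(\<lambda>\<omega>. a (W 0 0 \<omega>) * cnj (b (W 0 0 \<omega>))) \<in> borel_measurable Pr"
      using g by measurable
    show "AE \<omega> in Pr. norm (a (W 0 0 \<omega>) * cnj (b (W 0 0 \<omega>))) \<le> norm (2 * (cmod (W 0 0 \<omega>))\<^sup>2 + 2 * M\<^sup>2)"
    proof (intro AE_I2)
      fix \<omega>
      let ?z = "W 0 0 \<omega>"
      have "norm (a ?z * cnj (b ?z)) \<le> (cmod ?z + M) * (cmod ?z + M)"
        unfolding norm_mult complex_mod_cnj
        using a b M by (intro mult_mono) (simp_all add: borel_linear_growth_def)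
      also have "\<dots> \<le> 2 * (cmod ?z)\<^sup>2 + 2 * M\<^sup>2"
        using sum_squares_ge_zero[of "cmod ?z - M" 0] by (simp add: power2_eq_square algebra_simps)
      finally show "norm (a ?z * cnj (b ?z)) \<le> norm (2 * (cmod ?z)\<^sup>2 + 2 * M\<^sup>2)" by simp
    qed
  qed
  then show ?thesis by (subst integrable_entry_fun_iff[OF g])
qed

text \<open>Products of (functions of) distinct entries factorize, and a factor \<open>a(W e)\<close> or \<open>b(W e)\<close>
  without partner in the other product has mean zero.\<close>

lemma integral_prod_cnj_prod:
  assumes a: "borel_linear_growth M a" and b: "borel_linear_growth M b" and M: "0 \<le> M"
    and a0: "integral\<^sup>L Pr (\<lambda>\<omega>. a (W 0 0 \<omega>)) = 0" and b0: "integral\<^sup>L Pr (\<lambda>\<omega>. b (W 0 0 \<omega>)) = 0"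
    and A: "finite A" and B: "finite B"
  shows "integrable Pr (\<lambda>\<omega>. (\<Prod>e\<in>A. a (W (fst e) (snd e) \<omega>)) * cnj (\<Prod>e\<in>B. b (W (fst e) (snd e) \<omega>)))"
    and "integral\<^sup>L Pr (\<lambda>\<omega>. (\<Prod>e\<in>A. a (W (fst e) (snd e) \<omega>)) * cnj (\<Prod>e\<in>B. b (W (fst e) (snd e) \<omega>)))
         = (if A = B then cross_moment a b ^ card A else 0)"
proof -
  have am: "a \<in> borel_measurable borel" and bm: "b \<in> borel_measurable borel"
    using a b by (simp_all add: borel_linear_growth_def)
  define g where "g e z = (if e \<in> A then a z else 1) * (if e \<in> B then cnj (b z) else 1)" for e and z :: complex
  define Y where "Y e \<omega> = g e (W (fst e) (snd e) \<omega>)" for e \<omega>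
  have g_measurable: "g e \<in> borel_measurable borel" for e
    unfolding g_def using am bm by measurable
  have "indep_vars (\<lambda>_. borel) (\<lambda>e \<omega>. g e ((\<lambda>(i, j). W i j) e \<omega>)) UNIV"
    by (rule indep_vars_compose2[OF entries_indep]) (simp add: g_measurable)
  then have indep: "indep_vars (\<lambda>_. borel) Y (A \<union> B)"
    using indep_vars_subset[of _ _ UNIV "A \<union> B"] unfolding Y_def by (simp add: split_beta')
  have integrable_Y: "integrable Pr (Y e)" for e
  proof -
    obtain i j where [simp]: "e = (i, j)" by (cases e)
    have "integrable Pr (\<lambda>\<omega>. a (W i j \<omega>) * cnj (b (W i j \<omega>)))"
      "integrable Pr (\<lambda>\<omega>. a (W i j \<omega>))" "integrable Pr (\<lambda>\<omega>. cnj (b (W i j \<omega>)))"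
      using integrable_linear_growth_cnj[OF a b M] integrable_linear_growth[OF a M]
        integrable_linear_growth[OF b M] by simp_all
    then show ?thesis by (cases "e \<in> A"; cases "e \<in> B") (simp_all add: Y_def[abs_def] g_def)
  qed
  have prod_Y: "(\<Prod>e\<in>A \<union> B. Y e \<omega>) = (\<Prod>e\<in>A. a (W (fst e) (snd e) \<omega>)) * cnj (\<Prod>e\<in>B. b (W (fst e) (snd e) \<omega>))" for \<omega>
    unfolding Y_def g_def using prod_if_mult_if[OF A B] by simp
  have fin: "finite (A \<union> B)" using A B by simp
  show "integrable Pr (\<lambda>\<omega>. (\<Prod>e\<in>A. a (W (fst e) (snd e) \<omega>)) * cnj (\<Prod>e\<in>B. b (W (fst e) (snd e) \<omega>)))"
    using indep_vars_integrable[OF fin indep integrable_Y] by (simp add: prod_Y)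
  have "integral\<^sup>L Pr (\<lambda>\<omega>. (\<Prod>e\<in>A. a (W (fst e) (snd e) \<omega>)) * cnj (\<Prod>e\<in>B. b (W (fst e) (snd e) \<omega>)))
      = (\<Prod>e\<in>A \<union> B. integral\<^sup>L Pr (Y e))"
    using indep_vars_lebesgue_integral[OF fin indep integrable_Y] by (simp add: prod_Y)
  also have "\<dots> = (if A = B then cross_moment a b ^ card A else 0)"
  proof (cases "A = B")
    case True
    have "integral\<^sup>L Pr (Y e) = cross_moment a b" if "e \<in> A" for e
      using that True integral_entry_fun[of "\<lambda>z. a z * cnj (b z)" "fst e" "snd e"] am bm
      by (simp add: Y_def[abs_def] g_def cross_moment_def)
    then show ?thesis using True by simp
  next
    case False
    then obtain e where e: "e \<in> A \<union> B" "(e \<in> A) \<noteq> (e \<in> B)" by blast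
    then have "integral\<^sup>L Pr (Y e) = 0"
      using integral_entry_fun[OF am, of "fst e" "snd e"] integral_entry_fun[OF bm, of "fst e" "snd e"] a0 b0
      by (auto simp: Y_def[abs_def] g_def)
    then show ?thesis using False e(1) fin by (auto intro: prod_zero)
  qed
  finally show "integral\<^sup>L Pr (\<lambda>\<omega>. (\<Prod>e\<in>A. a (W (fst e) (snd e) \<omega>)) * cnj (\<Prod>e\<in>B. b (W (fst e) (snd e) \<omega>)))
    = (if A = B then cross_moment a b ^ card A else 0)" .
qed

end

section \<open>The truncation error\<close>

lemma nn_integral_cmod_sum_sq_orthogonal:
  fixes f :: "'i \<Rightarrow> 'a \<Rightarrow> complex" and c :: "'i \<Rightarrow> complex"
  assumes F: "finite F"
    and integrable: "\<And>t t'. t \<in> F \<Longrightarrow> t' \<in> F \<Longrightarrow> integrable M (\<lambda>x. f t x * cnj (f t' x))"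
    and orthogonal: "\<And>t t'. t \<in> F \<Longrightarrow> t' \<in> F \<Longrightarrow>
       integral\<^sup>L M (\<lambda>x. f t x * cnj (f t' x)) = (if t = t' then d else 0)"
  shows "(\<integral>\<^sup>+x. ennreal ((cmod (\<Sum>t\<in>F. c t * f t x))\<^sup>2) \<partial>M) = ennreal ((\<Sum>t\<in>F. (cmod (c t))\<^sup>2) * Re d)"
proof -
  define D where "D x = (\<Sum>t\<in>F. c t * f t x)" for x
  have D_sq: "complex_of_real ((cmod (D x))\<^sup>2) = (\<Sum>t\<in>F. \<Sum>t'\<in>F. (c t * cnj (c t')) * (f t x * cnj (f t' x)))" for x
    unfolding complex_norm_square D_def by (simp add: sum_product mult_ac)
  have "integrable M (\<lambda>x. complex_of_real ((cmod (D x))\<^sup>2))"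
    unfolding D_sq using integrable by (intro Bochner_Integration.integrable_sum integrable_mult_right) auto
  then have integrable_sq: "integrable M (\<lambda>x. (cmod (D x))\<^sup>2)"
    by (rule complex_of_real_integrable_eq[THEN iffD1])
  have "complex_of_real (integral\<^sup>L M (\<lambda>x. (cmod (D x))\<^sup>2))
      = (\<Sum>t\<in>F. \<Sum>t'\<in>F. (c t * cnj (c t')) * (if t = t' then d else 0))"
    unfolding integral_complex_of_real[symmetric] D_sq using integrable orthogonal
    by (simp add: Bochner_Integration.integral_sum Bochner_Integration.integrable_sum)
  also have "\<dots> = (\<Sum>t\<in>F. complex_of_real ((cmod (c t))\<^sup>2) * d)"
    unfolding complex_norm_square using F by (simp add: if_distrib[of "\<lambda>x. _ * x"] cong: if_cong)
  also have "\<dots> = complex_of_real (\<Sum>t\<in>F. (cmod (c t))\<^sup>2) * d"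
    by (simp add: sum_distrib_right)
  finally have eq: "complex_of_real (integral\<^sup>L M (\<lambda>x. (cmod (D x))\<^sup>2))
    = complex_of_real (\<Sum>t\<in>F. (cmod (c t))\<^sup>2) * d" .
  have "integral\<^sup>L M (\<lambda>x. (cmod (D x))\<^sup>2) = (\<Sum>t\<in>F. (cmod (c t))\<^sup>2) * Re d"
    using arg_cong[where f=Re, OF eq] by simp
  then show ?thesis
    using nn_integral_eq_integral[OF integrable_sq] by (simp add: D_def)
qed

definition truncate_at :: "real \<Rightarrow> complex \<Rightarrow> complex" where
  "truncate_at m z = (if cmod z \<le> m then z else 0)"

lemma truncate_at_measurable [measurable]: "truncate_at m \<in> borel_measurable borel"
  unfolding truncate_at_def by measurable

lemma norm_truncate_at_le: "cmod (truncate_at m z) \<le> cmod z"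
  by (simp add: truncate_at_def)

lemma truncate_at_tendsto: "((\<lambda>m. truncate_at m z) \<longlongrightarrow> z) at_top"
proof (rule tendsto_eventually)
  show "\<forall>\<^sub>F m in at_top. truncate_at m z = z"
    using eventually_ge_at_top[of "cmod z"] by eventually_elim (simp add: truncate_at_def)
qed

definition perm_graph :: "nat set \<Rightarrow> (nat \<Rightarrow> nat) \<Rightarrow> (nat \<times> nat) set" where
  "perm_graph I p = (\<lambda>i. (i, p i)) ` I"

lemma prod_perm_graph: "(\<Prod>e\<in>perm_graph I p. g (fst e) (snd e)) = (\<Prod>i\<in>I. g i (p i))"
  unfolding perm_graph_def by (subst prod.reindex) (auto intro: inj_onI)

lemma card_perm_graph: "card (perm_graph I p) = card I"
  unfolding perm_graph_def by (subst card_image) (auto intro: inj_onI)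

lemma finite_perm_graph: "(I, p) \<in> perm_pairs n k \<Longrightarrow> finite (perm_graph I p)"
  unfolding perm_graph_def perm_pairs_def using finite_subset[of _ "{..<n}"] by auto

lemma perm_graph_eq_iff:
  assumes "p permutes I" "p' permutes I'"
  shows "perm_graph I p = perm_graph I' p' \<longleftrightarrow> I = I' \<and> p = p'"
proof
  assume eq: "perm_graph I p = perm_graph I' p'"
  have II: "I = I'"
    using arg_cong[OF eq, of "image fst"] by (simp add: perm_graph_def image_image)
  have "p x = p' x" for x
  proof (cases "x \<in> I")
    case True
    then have "(x, p x) \<in> perm_graph I' p'" using eq by (auto simp: perm_graph_def)
    then show ?thesis by (auto simp: perm_graph_def)
  qed (use II assms in \<open>simp add: permutes_not_in\<close>)
  then show "I = I' \<and> p = p'" using II by auto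
qed simp

lemma Pk_eq_sum_perm_pairs:
  "Pk n k X = (\<Sum>(I, p)\<in>perm_pairs n k. of_int (sign p) * (\<Prod>i\<in>I. X i (p i)))"
proof -
  have "finite {I. I \<subseteq> {..<n} \<and> card I = k}" by (rule finite_subset[of _ "Pow {..<n}"]) auto
  then show ?thesis
    unfolding Pk_def detI_def perm_pairs_def
    by (subst sum.Sigma) (auto intro!: finite_permutations intro: finite_subset[of _ "{..<n}"])
qed

context iid_entries
begin

definition truncated_mean :: "real \<Rightarrow> complex" where
  "truncated_mean m = integral\<^sup>L Pr (\<lambda>\<omega>. truncate_at m (W 0 0 \<omega>))"

definition centered_truncation :: "real \<Rightarrow> complex \<Rightarrow> complex" where
  "centered_truncation m z = truncate_at m z - truncated_mean m"

text \<open>By independence, this is the second moment of \<open>\<Prod>\<^sub>e W\<^sub>e - \<Prod>\<^sub>e centered_truncation m W\<^sub>e\<close>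
  over any \<open>k\<close> distinct entries \<open>e\<close>.\<close>

definition truncation_defect :: "nat \<Rightarrow> real \<Rightarrow> complex" where
  "truncation_defect k m =
     cross_moment (\<lambda>z. z) (\<lambda>z. z) ^ k - cross_moment (\<lambda>z. z) (centered_truncation m) ^ k
     - cross_moment (centered_truncation m) (\<lambda>z. z) ^ k
     + cross_moment (centered_truncation m) (centered_truncation m) ^ k"

lemma centered_truncation_measurable [measurable]: "centered_truncation m \<in> borel_measurable borel"
  unfolding centered_truncation_def by measurable

lemma integrable_truncate_at: "integrable Pr (\<lambda>\<omega>. truncate_at m (W i j \<omega>))"
  by (rule integrable_linear_growth[of 0]) (simp_all add: borel_linear_growth_def norm_truncate_at_le)

lemma trunc_centered_eq: "trunc_centered Pr m (W i j) \<omega> = centered_truncation m (W i j \<omega>)"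
proof -
  have "integral\<^sup>L Pr (\<lambda>\<omega>'. if cmod (W i j \<omega>') \<le> m then W i j \<omega>' else 0) = truncated_mean m"
    unfolding truncated_mean_def using integral_entry_fun[OF truncate_at_measurable, of m i j]
    by (simp add: truncate_at_def)
  then show ?thesis by (simp add: trunc_centered_def centered_truncation_def truncate_at_def)
qed

lemma centered_truncation_linear_growth:
  "borel_linear_growth (cmod (truncated_mean m)) (centered_truncation m)"
  unfolding borel_linear_growth_def
proof (intro conjI allI)
  fix z
  show "cmod (centered_truncation m z) \<le> cmod z + cmod (truncated_mean m)"
    using norm_triangle_ineq4[of "truncate_at m z" "truncated_mean m"] norm_truncate_at_le[of m z]
    unfolding centered_truncation_def by linarith
qed simp

lemma integral_centered_truncation: "integral\<^sup>L Pr (\<lambda>\<omega>. centered_truncation m (W 0 0 \<omega>)) = 0"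
  using integrable_truncate_at[of m 0 0] by (simp add: centered_truncation_def truncated_mean_def prob_space)

lemma integral_cross_term:
  fixes m :: real
  assumes t: "(I, p) \<in> perm_pairs n k" and t': "(I', p') \<in> perm_pairs n k"
  defines "X \<equiv> \<lambda>I p \<omega>. (\<Prod>i\<in>I. W i (p i) \<omega>) - (\<Prod>i\<in>I. centered_truncation m (W i (p i) \<omega>))"
  shows "integrable Pr (\<lambda>\<omega>. X I p \<omega> * cnj (X I' p' \<omega>))"
    and "integral\<^sup>L Pr (\<lambda>\<omega>. X I p \<omega> * cnj (X I' p' \<omega>))
      = (if (I, p) = (I', p') then truncation_defect k m else 0)"
proof -
  let ?M = "cmod (truncated_mean m)" and ?G = "perm_graph I p" and ?G' = "perm_graph I' p'"
  let ?P = "\<lambda>a G \<omega>. \<Prod>e\<in>G. a (W (fst e) (snd e) \<omega>)"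
  have fin: "finite ?G" "finite ?G'" using finite_perm_graph t t' by auto
  have card: "card ?G = k" "card ?G' = k"
    using t t' by (auto simp: card_perm_graph perm_pairs_def)
  have graph_eq: "?G = ?G' \<longleftrightarrow> (I, p) = (I', p')"
    using t t' by (simp add: perm_graph_eq_iff perm_pairs_def)
  have id: "borel_linear_growth ?M (\<lambda>z. z)" by (simp add: borel_linear_growth_id)
  note growth = id centered_truncation_linear_growth
  have expand: "X I p \<omega> * cnj (X I' p' \<omega>)
      = (?P (\<lambda>z. z) ?G \<omega> * cnj (?P (\<lambda>z. z) ?G' \<omega>) - ?P (\<lambda>z. z) ?G \<omega> * cnj (?P (centered_truncation m) ?G' \<omega>))
      - (?P (centered_truncation m) ?G \<omega> * cnj (?P (\<lambda>z. z) ?G' \<omega>)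
         - ?P (centered_truncation m) ?G \<omega> * cnj (?P (centered_truncation m) ?G' \<omega>))" for \<omega>
    unfolding X_def prod_perm_graph[of "\<lambda>a b. W a b \<omega>"]
      prod_perm_graph[of "\<lambda>a b. centered_truncation m (W a b \<omega>)"]
    by (simp add: algebra_simps)
  have ab: "integrable Pr (\<lambda>\<omega>. ?P a ?G \<omega> * cnj (?P b ?G' \<omega>))"
    "integral\<^sup>L Pr (\<lambda>\<omega>. ?P a ?G \<omega> * cnj (?P b ?G' \<omega>))
       = (if (I, p) = (I', p') then cross_moment a b ^ k else 0)"
    if "a \<in> {\<lambda>z. z, centered_truncation m}" "b \<in> {\<lambda>z. z, centered_truncation m}" for a b
  proof -
    have "borel_linear_growth ?M a" "borel_linear_growth ?M b"
      "integral\<^sup>L Pr (\<lambda>\<omega>. a (W 0 0 \<omega>)) = 0" "integral\<^sup>L Pr (\<lambda>\<omega>. b (W 0 0 \<omega>)) = 0"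
      using that growth integral_centered_truncation entry_mean by auto
    note moments = integral_prod_cnj_prod[OF this(1,2) norm_ge_zero this(3,4) fin]
    show "integrable Pr (\<lambda>\<omega>. ?P a ?G \<omega> * cnj (?P b ?G' \<omega>))" by (rule moments(1))
    show "integral\<^sup>L Pr (\<lambda>\<omega>. ?P a ?G \<omega> * cnj (?P b ?G' \<omega>))
       = (if (I, p) = (I', p') then cross_moment a b ^ k else 0)"
      using moments(2) by (simp add: graph_eq card)
  qed
  note ab11 = ab[of "\<lambda>z. z" "\<lambda>z. z"] and ab12 = ab[of "\<lambda>z. z" "centered_truncation m"]
    and ab21 = ab[of "centered_truncation m" "\<lambda>z. z"]
    and ab22 = ab[of "centered_truncation m" "centered_truncation m"]
  show "integrable Pr (\<lambda>\<omega>. X I p \<omega> * cnj (X I' p' \<omega>))"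
    unfolding expand using ab11 ab12 ab21 ab22 by (intro Bochner_Integration.integrable_diff) auto
  show "integral\<^sup>L Pr (\<lambda>\<omega>. X I p \<omega> * cnj (X I' p' \<omega>))
      = (if (I, p) = (I', p') then truncation_defect k m else 0)"
    unfolding expand using ab11 ab12 ab21 ab22 by (simp add: truncation_defect_def)
qed

lemma second_moment_truncation_error:
  assumes S_nonneg: "\<And>i j. i < n \<Longrightarrow> j < n \<Longrightarrow> 0 \<le> S i j"
  shows "(\<integral>\<^sup>+\<omega>. ennreal ((cmod (Pk n k (\<lambda>i j. complex_of_real (sqrt (S i j)) * W i j \<omega>)
            - Pk n k (\<lambda>i j. complex_of_real (sqrt (S i j)) * trunc_centered Pr m (W i j) \<omega>)))\<^sup>2) \<partial>Pr)
        = ennreal (principal_permanent_sum n S k * Re (truncation_defect k m))"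
proof -
  define c where "c = (\<lambda>(I, p). of_int (sign p) * complex_of_real (\<Prod>i\<in>I. sqrt (S i (p i))))"
  define X where "X = (\<lambda>(I, p) \<omega>. (\<Prod>i\<in>I. W i (p i) \<omega>) - (\<Prod>i\<in>I. centered_truncation m (W i (p i) \<omega>)))"
  have difference: "Pk n k (\<lambda>i j. complex_of_real (sqrt (S i j)) * W i j \<omega>)
      - Pk n k (\<lambda>i j. complex_of_real (sqrt (S i j)) * trunc_centered Pr m (W i j) \<omega>)
      = (\<Sum>t\<in>perm_pairs n k. c t * X t \<omega>)" for \<omega>
    unfolding Pk_eq_sum_perm_pairs sum_subtractf[symmetric]
    by (intro sum.cong refl)
       (auto simp: c_def X_def trunc_centered_eq prod.distrib right_diff_distrib mult.assoc of_real_prod)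
  have weight: "(cmod (c t))\<^sup>2 = perm_weight S I p" if "t = (I, p)" "t \<in> perm_pairs n k" for t I p
  proof -
    have "(cmod (c t))\<^sup>2 = (\<Prod>i\<in>I. (sqrt (S i (p i)))\<^sup>2)"
      using that by (simp add: c_def norm_mult prod_norm[symmetric] prod_power_distrib sign_def)
    also have "\<dots> = perm_weight S I p"
      unfolding perm_weight_def using that S_nonneg
      by (intro prod.cong refl) (auto simp: perm_pairs_def dest: permutes_in_image)
    finally show ?thesis .
  qed
  have "(\<integral>\<^sup>+\<omega>. ennreal ((cmod (\<Sum>t\<in>perm_pairs n k. c t * X t \<omega>))\<^sup>2) \<partial>Pr)
      = ennreal ((\<Sum>t\<in>perm_pairs n k. (cmod (c t))\<^sup>2) * Re (truncation_defect k m))"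
  proof (rule nn_integral_cmod_sum_sq_orthogonal[OF finite_perm_pairs])
    fix t t' assume tt': "t \<in> perm_pairs n k" "t' \<in> perm_pairs n k"
    obtain I p I' p' where [simp]: "t = (I, p)" "t' = (I', p')" by fastforce
    show "integrable Pr (\<lambda>\<omega>. X t \<omega> * cnj (X t' \<omega>))"
      "integral\<^sup>L Pr (\<lambda>\<omega>. X t \<omega> * cnj (X t' \<omega>)) = (if t = t' then truncation_defect k m else 0)"
      using integral_cross_term[of I p n k I' p' m] tt' by (simp_all add: X_def)
  qed
  also have "(\<Sum>t\<in>perm_pairs n k. (cmod (c t))\<^sup>2) = principal_permanent_sum n S k"
    unfolding principal_permanent_sum_def using weight by (intro sum.cong refl) auto
  finally show ?thesis by (simp only: difference)
qed

lemma norm_truncated_mean_le: "cmod (truncated_mean m) \<le> integral\<^sup>L Pr (\<lambda>\<omega>. cmod (W 0 0 \<omega>))"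
proof -
  have "cmod (truncated_mean m) \<le> integral\<^sup>L Pr (\<lambda>\<omega>. cmod (truncate_at m (W 0 0 \<omega>)))"
    unfolding truncated_mean_def by (rule integral_norm_bound)
  also have "\<dots> \<le> integral\<^sup>L Pr (\<lambda>\<omega>. cmod (W 0 0 \<omega>))"
    using integrable_truncate_at[of m 0 0] integrable_entry
    by (intro integral_mono) (auto simp: norm_truncate_at_le)
  finally show ?thesis .
qed

lemma truncated_mean_tendsto: "(truncated_mean \<longlongrightarrow> 0) at_top"
proof -
  have "((\<lambda>m. integral\<^sup>L Pr (\<lambda>\<omega>. truncate_at m (W 0 0 \<omega>))) \<longlongrightarrow> integral\<^sup>L Pr (W 0 0)) at_top"
  proof (rule integral_dominated_convergence_at_top[where w="\<lambda>\<omega>. cmod (W 0 0 \<omega>)"])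
    show "integrable Pr (\<lambda>\<omega>. cmod (W 0 0 \<omega>))" using integrable_entry by simp
    show "AE \<omega> in Pr. ((\<lambda>m. truncate_at m (W 0 0 \<omega>)) \<longlongrightarrow> W 0 0 \<omega>) at_top"
      by (simp add: truncate_at_tendsto)
    show "\<forall>\<^sub>F m in at_top. AE \<omega> in Pr. norm (truncate_at m (W 0 0 \<omega>)) \<le> cmod (W 0 0 \<omega>)"
      by (simp add: norm_truncate_at_le)
  qed simp_all
  then show ?thesis using entry_mean by (simp add: truncated_mean_def[abs_def])
qed

lemma centered_truncation_tendsto: "((\<lambda>m. centered_truncation m z) \<longlongrightarrow> z) at_top"
  using tendsto_diff[OF truncate_at_tendsto truncated_mean_tendsto] by (simp add: centered_truncation_def)

lemma cross_moment_id_id: "cross_moment (\<lambda>z. z) (\<lambda>z. z) = 1"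
proof -
  have "cross_moment (\<lambda>z. z) (\<lambda>z. z) = integral\<^sup>L Pr (\<lambda>\<omega>. complex_of_real ((cmod (W 0 0 \<omega>))\<^sup>2))"
    unfolding cross_moment_def by (simp only: complex_norm_square)
  also have "\<dots> = complex_of_real (integral\<^sup>L Pr (\<lambda>\<omega>. (cmod (W 0 0 \<omega>))\<^sup>2))"
    by (rule integral_complex_of_real)
  also have "\<dots> = 1" using entry_second_moment by simp
  finally show ?thesis .
qed

text \<open>Dominated convergence, with the bound \<open>(|z| + \<integral>|W|)\<^sup>2\<close> from the linear growth.\<close>

lemma cross_moment_tendsto_one:
  fixes a b :: "real \<Rightarrow> complex \<Rightarrow> complex"
  assumes "\<And>m. borel_linear_growth (integral\<^sup>L Pr (\<lambda>\<omega>. cmod (W 0 0 \<omega>))) (a m)" "\<And>z. ((\<lambda>m. a m z) \<longlongrightarrow> z) at_top"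
    and "\<And>m. borel_linear_growth (integral\<^sup>L Pr (\<lambda>\<omega>. cmod (W 0 0 \<omega>))) (b m)" "\<And>z. ((\<lambda>m. b m z) \<longlongrightarrow> z) at_top"
  shows "((\<lambda>m. cross_moment (a m) (b m)) \<longlongrightarrow> 1) at_top"
proof -
  define C where "C = integral\<^sup>L Pr (\<lambda>\<omega>. cmod (W 0 0 \<omega>))"
  have C: "0 \<le> C" by (simp add: C_def)
  have am [measurable]: "a m \<in> borel_measurable borel" and bm [measurable]: "b m \<in> borel_measurable borel" for m
    using assms(1,3) by (simp_all add: borel_linear_growth_def)
  have "((\<lambda>m. cross_moment (a m) (b m)) \<longlongrightarrow> cross_moment (\<lambda>z. z) (\<lambda>z. z)) at_top"
    unfolding cross_moment_def
  proof (rule integral_dominated_convergence_at_top[where w="\<lambda>\<omega>. (cmod (W 0 0 \<omega>))\<^sup>2 + 2 * C * cmod (W 0 0 \<omega>) + C\<^sup>2"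
        and s="\<lambda>m \<omega>. a m (W 0 0 \<omega>) * cnj (b m (W 0 0 \<omega>))" and f="\<lambda>\<omega>. W 0 0 \<omega> * cnj (W 0 0 \<omega>)"])
    show "integrable Pr (\<lambda>\<omega>. (cmod (W 0 0 \<omega>))\<^sup>2 + 2 * C * cmod (W 0 0 \<omega>) + C\<^sup>2)"
      using integrable_entry integrable_entry_sq by auto
    show "AE \<omega> in Pr. ((\<lambda>m. a m (W 0 0 \<omega>) * cnj (b m (W 0 0 \<omega>))) \<longlongrightarrow> W 0 0 \<omega> * cnj (W 0 0 \<omega>)) at_top"
      by (intro AE_I2 tendsto_mult tendsto_cnj assms(2,4))
    show "\<forall>\<^sub>F m in at_top. AE \<omega> in Pr. norm (a m (W 0 0 \<omega>) * cnj (b m (W 0 0 \<omega>)))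
        \<le> (cmod (W 0 0 \<omega>))\<^sup>2 + 2 * C * cmod (W 0 0 \<omega>) + C\<^sup>2"
    proof (intro always_eventually allI AE_I2)
      fix m \<omega>
      let ?z = "W 0 0 \<omega>"
      have "norm (a m ?z * cnj (b m ?z)) \<le> (cmod ?z + C) * (cmod ?z + C)"
        unfolding norm_mult complex_mod_cnj using assms(1,3) C
        by (intro mult_mono) (simp_all add: C_def borel_linear_growth_def)
      then show "norm (a m ?z * cnj (b m ?z)) \<le> (cmod ?z)\<^sup>2 + 2 * C * cmod ?z + C\<^sup>2"
        by (simp add: power2_eq_square algebra_simps)
    qed
  qed simp_all
  then show ?thesis by (simp add: cross_moment_id_id)
qed

lemma truncation_defect_tendsto: "((\<lambda>m. Re (truncation_defect k m)) \<longlongrightarrow> 0) at_top"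
proof -
  have id: "borel_linear_growth (integral\<^sup>L Pr (\<lambda>\<omega>. cmod (W 0 0 \<omega>))) (\<lambda>z. z)"
    by (simp add: borel_linear_growth_id)
  have trunc: "borel_linear_growth (integral\<^sup>L Pr (\<lambda>\<omega>. cmod (W 0 0 \<omega>))) (centered_truncation m)" for m
    using centered_truncation_linear_growth[of m] norm_truncated_mean_le[of m]
    by (auto simp: borel_linear_growth_def intro: order.trans)
  have lim: "((\<lambda>m. cross_moment (\<lambda>z. z) (centered_truncation m)) \<longlongrightarrow> 1) at_top"
    "((\<lambda>m. cross_moment (centered_truncation m) (\<lambda>z. z)) \<longlongrightarrow> 1) at_top"
    "((\<lambda>m. cross_moment (centered_truncation m) (centered_truncation m)) \<longlongrightarrow> 1) at_top"
    using id trunc centered_truncation_tendsto by (intro cross_moment_tendsto_one; simp)+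
  have "((\<lambda>m. truncation_defect k m) \<longlongrightarrow> 1 ^ k - 1 ^ k - 1 ^ k + 1 ^ k) at_top"
    unfolding truncation_defect_def cross_moment_id_id
    by (intro tendsto_intros lim)
  then show ?thesis using tendsto_Re by fastforce
qed

end

lemma ennreal_mult_right_mono:
  fixes x y d :: real
  assumes "0 \<le> x" "x \<le> y"
  shows "ennreal (x * d) \<le> ennreal (y * d)"
proof (cases "0 \<le> d")
  case True
  then show ?thesis using assms by (intro ennreal_leI mult_right_mono)
next
  case False
  then have "x * d \<le> 0" using assms(1) by (simp add: mult_nonneg_nonpos)
  then have "ennreal (x * d) = 0" by (simp add: ennreal_eq_0_iff)
  then show ?thesis by simp
qed

text \<open>The bound holds for every \<open>m\<close>, \<open>n\<close> and \<open>k\<close>.\<close>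

theorem lemma3p10:
  fixes Pr :: "'s measure"
    and W :: "nat \<Rightarrow> nat \<Rightarrow> 's \<Rightarrow> complex"
    and S :: "nat \<Rightarrow> nat \<Rightarrow> nat \<Rightarrow> real"
    and k :: nat
  assumes "prob_space Pr"
    and meas: "\<And>i j. W i j \<in> borel_measurable Pr"
    and indep: "prob_space.indep_vars Pr (\<lambda>_. borel) (\<lambda>(i, j). W i j) UNIV"
    and ident: "\<And>i j. distr Pr borel (W i j) = distr Pr borel (W 0 0)"
    and int1: "integrable Pr (W 0 0)"
    and mean0: "integral\<^sup>L Pr (W 0 0) = 0"
    and int2: "integrable Pr (\<lambda>\<omega>. (cmod (W 0 0 \<omega>))\<^sup>2)"
    and var1: "integral\<^sup>L Pr (\<lambda>\<omega>. (cmod (W 0 0 \<omega>))\<^sup>2) = 1"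
    and Snonneg: "\<And>n i j. i < n \<Longrightarrow> j < n \<Longrightarrow> 0 \<le> S n i j"
    and A2: "assumption2 S"
    and kpos: "0 < k"
  shows "\<exists>eps :: real \<Rightarrow> real. (eps \<longlongrightarrow> 0) at_top \<and>
    (\<forall>m > 0. \<forall>n \<ge> k.
       (\<integral>\<^sup>+ \<omega>. ennreal ((cmod (
           Pk n k (\<lambda>i j. complex_of_real (sqrt (S n i j)) * W i j \<omega>)
         - Pk n k (\<lambda>i j. complex_of_real (sqrt (S n i j)) * trunc_centered Pr m (W i j) \<omega>)))\<^sup>2) \<partial>Pr)
       \<le> ennreal (eps m))"
proof -
  interpret iid_entries Pr W
    by (rule iid_entries.intro[OF assms(1)], unfold_locales) (fact meas indep ident int1 mean0 int2 var1)+
  obtain B where B: "\<And>n. principal_permanent_sum n (S n) k \<le> B"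
    using principal_permanent_sum_bounded[OF Snonneg A2] by blast
  define eps where "eps m = B * Re (truncation_defect k m)" for m
  have "(eps \<longlongrightarrow> 0) at_top"
    unfolding eps_def using tendsto_mult[OF tendsto_const truncation_defect_tendsto, of B k] by simp
  moreover have "(\<integral>\<^sup>+ \<omega>. ennreal ((cmod (
           Pk n k (\<lambda>i j. complex_of_real (sqrt (S n i j)) * W i j \<omega>)
         - Pk n k (\<lambda>i j. complex_of_real (sqrt (S n i j)) * trunc_centered Pr m (W i j) \<omega>)))\<^sup>2) \<partial>Pr)
       = ennreal (principal_permanent_sum n (S n) k * Re (truncation_defect k m))" for m n
    by (rule second_moment_truncation_error) (fact Snonneg)
  moreover have "ennreal (principal_permanent_sum n (S n) k * Re (truncation_defect k m)) \<le> ennreal (eps m)" for m n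
    unfolding eps_def using principal_permanent_sum_nonneg[of n "S n" k] Snonneg B
    by (intro ennreal_mult_right_mono) auto
  ultimately show ?thesis by (intro exI[of _ eps]) auto
qed

end
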